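(* For every complex Banach space $X$ with open unit ball $B$ and every $f\in A_u(B)$, $$Cl_B(f,0)=\bigcap_{Y}\widehat{f|_{B_Y}}\big(M_0(B_Y)\big),$$ where the intersection runs over all closed subspaces $Y\subset X$ with $\dim(X/Y)<\infty$, $B_Y$ denotes the open unit ball of $Y$, and $M_0(B_Y)$ is the fiber over $0$ of the spectrum of $A_u(B_Y)$.
   Context: For a Banach space $Z$ with open unit ball $B_Z$, $A_u(B_Z)$ is the uniform algebra of bounded holomorphic functions on $B_Z$ that are uniformly continuous; $M_0(B_Z)$ is the set of nonzero multiplicative linear functionals $\tau$ on $A_u(B_Z)$ with $\tau(z^* )=0$ for every $z^*\in Z^*$; $\hat g(\tau)=\tau(g)$ is the Gelfand transform. $Cl_{B}(f,0)$ is the set of all limits $\lim_\alpha f(x_\alpha)$ over nets $(x_\alpha)$ in $B$ converging weakly to $0$. *)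

theory Defs
  imports "HOL-Analysis.Analysis"
begin

class complex_normed_vector = real_normed_vector +
  fixes scaleC :: "complex \<Rightarrow> 'a \<Rightarrow> 'a" (infixr \<open>*\<^sub>C\<close> 75)
  assumes scaleC_add_right: "a *\<^sub>C (x + y) = a *\<^sub>C x + a *\<^sub>C y"
    and scaleC_add_left: "(a + b) *\<^sub>C x = a *\<^sub>C x + b *\<^sub>C x"
    and scaleC_scaleC: "a *\<^sub>C (b *\<^sub>C x) = (a * b) *\<^sub>C x"
    and scaleC_one: "1 *\<^sub>C x = x"
    and scaleC_of_real: "(of_real r) *\<^sub>C x = r *\<^sub>R x"
    and norm_scaleC: "norm (a *\<^sub>C x) = cmod a * norm x"

instantiation complex :: complex_normed_vector
begin
definition scaleC_complex :: "complex \<Rightarrow> complex \<Rightarrow> complex" where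
  "scaleC_complex a x = a * x"
instance
  by standard (auto simp: scaleC_complex_def algebra_simps norm_mult scaleR_conv_of_real)
end

definition csubspace :: "'a::complex_normed_vector set \<Rightarrow> bool" where
  "csubspace Y \<longleftrightarrow> 0 \<in> Y \<and> (\<forall>x\<in>Y. \<forall>y\<in>Y. x + y \<in> Y) \<and> (\<forall>c. \<forall>x\<in>Y. c *\<^sub>C x \<in> Y)"

text \<open>\<open>dim (X/Y) < \<infinity>\<close>: X = Y + span_C F for some finite F.\<close>
definition finite_codim :: "'a::complex_normed_vector set \<Rightarrow> bool" where
  "finite_codim Y \<longleftrightarrow> (\<exists>F. finite F \<and>
      (\<forall>x. \<exists>y\<in>Y. \<exists>c. x = y + (\<Sum>a\<in>F. c a *\<^sub>C a)))"

definition unit_ball :: "'a::complex_normed_vector set \<Rightarrow> 'a set" where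
  "unit_ball Y = Y \<inter> ball 0 1"

definition clinear_on :: "'a::complex_normed_vector set \<Rightarrow> ('a \<Rightarrow> complex) \<Rightarrow> bool" where
  "clinear_on Y L \<longleftrightarrow> (\<forall>x\<in>Y. \<forall>y\<in>Y. L (x + y) = L x + L y) \<and>
                        (\<forall>c. \<forall>x\<in>Y. L (c *\<^sub>C x) = c * L x)"

definition cbounded_on :: "'a::complex_normed_vector set \<Rightarrow> ('a \<Rightarrow> complex) \<Rightarrow> bool" where
  "cbounded_on Y L \<longleftrightarrow> (\<exists>K. \<forall>x\<in>Y. cmod (L x) \<le> K * norm x)"

text \<open>Dual space \<open>Y\<^sup>*\<close>: bounded complex-linear functionals on Y (values off Y irrelevant).\<close>
definition cdual :: "'a::complex_normed_vector set \<Rightarrow> ('a \<Rightarrow> complex) set" where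
  "cdual Y = {L. clinear_on Y L \<and> cbounded_on Y L}"

definition holomorphic_rel :: "'a::complex_normed_vector set \<Rightarrow> 'a set \<Rightarrow> ('a \<Rightarrow> complex) \<Rightarrow> bool" where
  "holomorphic_rel Y U g \<longleftrightarrow> (\<forall>x\<in>U. \<exists>L. L \<in> cdual Y \<and>
      ((\<lambda>h. cmod (g (x + h) - g x - L h) / norm h) \<longlongrightarrow> 0) (at 0 within Y))"

text \<open>Functions on \<open>B_Y\<close> are represented extensionally: zero outside \<open>B_Y\<close>.\<close>
definition restr :: "'a::complex_normed_vector set \<Rightarrow> ('a \<Rightarrow> complex) \<Rightarrow> 'a \<Rightarrow> complex" where
  "restr Y g = (\<lambda>x. if x \<in> unit_ball Y then g x else 0)"

definition Au :: "'a::complex_normed_vector set \<Rightarrow> ('a \<Rightarrow> complex) set" where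
  "Au Y = {g. (\<forall>x. x \<notin> unit_ball Y \<longrightarrow> g x = 0) \<and>
              bounded (g ` unit_ball Y) \<and>
              uniformly_continuous_on (unit_ball Y) g \<and>
              holomorphic_rel Y (unit_ball Y) g}"

definition spectrum_Au :: "'a::complex_normed_vector set \<Rightarrow> (('a \<Rightarrow> complex) \<Rightarrow> complex) set" where
  "spectrum_Au Y = {\<tau>.
      (\<forall>g\<in>Au Y. \<forall>h\<in>Au Y. \<tau> (\<lambda>x. g x + h x) = \<tau> g + \<tau> h) \<and>
      (\<forall>c. \<forall>g\<in>Au Y. \<tau> (\<lambda>x. c * g x) = c * \<tau> g) \<and>
      (\<forall>g\<in>Au Y. \<forall>h\<in>Au Y. \<tau> (\<lambda>x. g x * h x) = \<tau> g * \<tau> h) \<and>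
      (\<exists>g\<in>Au Y. \<tau> g \<noteq> 0)}"

definition M0 :: "'a::complex_normed_vector set \<Rightarrow> (('a \<Rightarrow> complex) \<Rightarrow> complex) set" where
  "M0 Y = {\<tau> \<in> spectrum_Au Y. \<forall>z \<in> cdual Y. \<tau> (restr Y z) = 0}"

text \<open>Nets are represented by (proper) filters; a net converges weakly to 0 iff every
  bounded complex-linear functional tends to 0 along it.\<close>
definition weak_cluster_0 :: "('a::complex_normed_vector \<Rightarrow> complex) \<Rightarrow> complex set" where
  "weak_cluster_0 f = {c. \<exists>F. F \<noteq> bot \<and> eventually (\<lambda>x. x \<in> ball 0 1) F \<and>
        (\<forall>\<phi> \<in> cdual UNIV. (\<phi> \<longlongrightarrow> 0) F) \<and> (f \<longlongrightarrow> c) F}"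

end

theory Submission
  imports Defs
begin

text \<open>
  \<open>\<supseteq>\<close>: if \<open>c\<close> is a value \<open>\<tau>(f|B_Y)\<close> on every kernel \<open>Y\<close> of finitely many functionals,
  then, since the Gelfand transform of \<open>g \<in> A_u(B_Y)\<close> takes its values in the closure of
  \<open>g(B_Y)\<close> (otherwise \<open>g - \<tau> g\<close> would be invertible), there are points of \<open>B_Y\<close> where \<open>f\<close>
  is close to \<open>c\<close>; directing them by (finite set of functionals, tolerance) gives a weakly
  null net along which \<open>f \<rightarrow> c\<close>.

  \<open>\<subseteq>\<close>: a closed subspace \<open>Y\<close> of finite codimension admits a linear map \<open>P\<close> into \<open>Y\<close> whose
  defect \<open>\<parallel>x - P x\<parallel>\<close> is dominated by finitely many functionals. Along a weakly null net
  \<open>x\<^sub>\<alpha>\<close> in \<open>B\<close> the defect tends to 0, so a slight shrinking of \<open>P x\<^sub>\<alpha>\<close> gives a weakly null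
  net in \<open>B_Y\<close> along which \<open>f \<rightarrow> c\<close>. A cluster point of the corresponding point
  evaluations (Tychonoff) is a character in \<open>M\<^sub>0(B_Y)\<close> with value \<open>c\<close> at \<open>f|B_Y\<close>.
\<close>

lemma scaleC_zero_left [simp]: "(0::complex) *\<^sub>C (x::'a::complex_normed_vector) = 0"
  by (metis scaleC_of_real of_real_0 scaleR_zero_left)

lemma scaleC_minus1: "(-1::complex) *\<^sub>C (x::'a::complex_normed_vector) = - x"
  by (metis scaleC_of_real of_real_1 of_real_minus scaleR_minus1_left)

lemma scaleC_minus_right: "a *\<^sub>C (- x) = - (a *\<^sub>C (x::'a::complex_normed_vector))"
  by (metis scaleC_minus1 scaleC_scaleC mult.commute)

lemma scaleC_minus_left: "(- a) *\<^sub>C x = - (a *\<^sub>C (x::'a::complex_normed_vector))"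
  by (metis scaleC_minus1 scaleC_scaleC mult_minus1)

lemma scaleC_diff_right: "a *\<^sub>C (x - y) = a *\<^sub>C x - a *\<^sub>C (y::'a::complex_normed_vector)"
  by (metis diff_conv_add_uminus scaleC_add_right scaleC_minus_right)

lemma scaleC_diff_left: "(a - b) *\<^sub>C x = a *\<^sub>C x - b *\<^sub>C (x::'a::complex_normed_vector)"
  by (metis diff_conv_add_uminus scaleC_add_left scaleC_minus_left)

lemma tendsto_scaleC_left:
  fixes a :: "'a::complex_normed_vector"
  assumes "(s \<longlongrightarrow> s0) F"
  shows "((\<lambda>n. s n *\<^sub>C a) \<longlongrightarrow> s0 *\<^sub>C a) F"
proof -
  have "((\<lambda>n. cmod (s n - s0) * norm a) \<longlongrightarrow> 0) F"
    using assms by (intro tendsto_mult_left_zero tendsto_norm_zero) (simp add: Lim_null[symmetric])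
  moreover have "\<forall>\<^sub>F n in F. norm (s n *\<^sub>C a - s0 *\<^sub>C a) \<le> cmod (s n - s0) * norm a"
    by (simp add: scaleC_diff_left[symmetric] norm_scaleC)
  ultimately show ?thesis
    by (subst Lim_null) (rule Lim_null_comparison)
qed

lemma csubspace_0: "csubspace Y \<Longrightarrow> 0 \<in> Y"
  by (simp add: csubspace_def)

lemma csubspace_add: "csubspace Y \<Longrightarrow> x \<in> Y \<Longrightarrow> y \<in> Y \<Longrightarrow> x + y \<in> Y"
  by (simp add: csubspace_def)

lemma csubspace_scaleC: "csubspace Y \<Longrightarrow> x \<in> Y \<Longrightarrow> c *\<^sub>C x \<in> Y"
  by (simp add: csubspace_def)

lemma csubspace_minus: "csubspace Y \<Longrightarrow> x \<in> Y \<Longrightarrow> - x \<in> Y"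
  by (metis csubspace_scaleC scaleC_minus1)

lemma csubspace_diff: "csubspace Y \<Longrightarrow> x \<in> Y \<Longrightarrow> y \<in> Y \<Longrightarrow> x - y \<in> Y"
  using csubspace_add[of Y x "-y"] csubspace_minus[of Y y] by simp

lemma csubspace_scaleR: "csubspace Y \<Longrightarrow> x \<in> Y \<Longrightarrow> r *\<^sub>R x \<in> Y"
  by (metis csubspace_scaleC scaleC_of_real)

lemma csubspace_UNIV: "csubspace (UNIV::'a::complex_normed_vector set)"
  by (simp add: csubspace_def)

lemma clinear_on_add: "clinear_on Y L \<Longrightarrow> x \<in> Y \<Longrightarrow> y \<in> Y \<Longrightarrow> L (x + y) = L x + L y"
  by (simp add: clinear_on_def)

lemma clinear_on_scaleC: "clinear_on Y L \<Longrightarrow> x \<in> Y \<Longrightarrow> L (c *\<^sub>C x) = c * L x"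
  by (simp add: clinear_on_def)

lemma clinear_on_0: "clinear_on Y L \<Longrightarrow> csubspace Y \<Longrightarrow> L 0 = 0"
  using clinear_on_scaleC[of Y L 0 0] csubspace_0[of Y] by simp

lemma clinear_on_minus: "clinear_on Y L \<Longrightarrow> x \<in> Y \<Longrightarrow> L (- x) = - L x"
  using clinear_on_scaleC[of Y L x "-1"] by (simp add: scaleC_minus1)

lemma clinear_on_diff:
  "clinear_on Y L \<Longrightarrow> csubspace Y \<Longrightarrow> x \<in> Y \<Longrightarrow> y \<in> Y \<Longrightarrow> L (x - y) = L x - L y"
  using clinear_on_add[of Y L x "-y"] clinear_on_minus[of Y L y] csubspace_minus[of Y y] by simp

lemma clinear_on_scaleR: "clinear_on Y L \<Longrightarrow> x \<in> Y \<Longrightarrow> L (r *\<^sub>R x) = of_real r * L x"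
  using clinear_on_scaleC[of Y L x "of_real r"] by (simp add: scaleC_of_real)

lemma cdual_clinear_on: "L \<in> cdual Y \<Longrightarrow> clinear_on Y L"
  by (simp add: cdual_def)

lemma cdual_mono: "Y \<subseteq> Y' \<Longrightarrow> L \<in> cdual Y' \<Longrightarrow> L \<in> cdual Y"
  unfolding cdual_def clinear_on_def cbounded_on_def by blast

lemma cdual_bound:
  assumes "L \<in> cdual Y"
  obtains K where "K \<ge> 0" "\<And>x. x \<in> Y \<Longrightarrow> cmod (L x) \<le> K * norm x"
proof -
  obtain K where K: "\<forall>x\<in>Y. cmod (L x) \<le> K * norm x"
    using assms by (auto simp: cdual_def cbounded_on_def)
  have *: "cmod (L x) \<le> max K 0 * norm x" if "x \<in> Y" for x
    using K that mult_right_mono[of K "max K 0" "norm x"] by (meson max.cobounded1 norm_ge_zero order_trans)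
  show thesis
    by (rule that[of "max K 0"]) (simp_all add: *)
qed

lemma cdual_zero: "(\<lambda>_. 0) \<in> cdual Y"
  unfolding cdual_def clinear_on_def cbounded_on_def by (simp, rule exI[of _ 0], simp)

lemma cdual_add:
  assumes "L1 \<in> cdual Y" "L2 \<in> cdual Y"
  shows "(\<lambda>h. L1 h + L2 h) \<in> cdual Y"
proof -
  obtain K1 where "K1 \<ge> 0" and K1: "\<And>x. x \<in> Y \<Longrightarrow> cmod (L1 x) \<le> K1 * norm x"
    using cdual_bound[OF assms(1)] by blast
  obtain K2 where "K2 \<ge> 0" and K2: "\<And>x. x \<in> Y \<Longrightarrow> cmod (L2 x) \<le> K2 * norm x"
    using cdual_bound[OF assms(2)] by blast
  have "cmod (L1 x + L2 x) \<le> (K1 + K2) * norm x" if "x \<in> Y" for x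
    using norm_triangle_ineq[of "L1 x" "L2 x"] K1[OF that] K2[OF that] by (simp add: distrib_right)
  then have "cbounded_on Y (\<lambda>h. L1 h + L2 h)"
    unfolding cbounded_on_def by blast
  moreover have "clinear_on Y (\<lambda>h. L1 h + L2 h)"
    using cdual_clinear_on[OF assms(1)] cdual_clinear_on[OF assms(2)]
    by (simp add: clinear_on_def distrib_left)
  ultimately show ?thesis
    by (simp add: cdual_def)
qed

lemma cdual_cmult:
  assumes "L \<in> cdual Y"
  shows "(\<lambda>h. k * L h) \<in> cdual Y"
proof -
  obtain K where "K \<ge> 0" and K: "\<And>x. x \<in> Y \<Longrightarrow> cmod (L x) \<le> K * norm x"
    using cdual_bound[OF assms] by blast
  have "cmod (k * L x) \<le> (cmod k * K) * norm x" if "x \<in> Y" for x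
    using mult_left_mono[OF K[OF that], of "cmod k"] by (simp add: norm_mult mult.assoc)
  then have "cbounded_on Y (\<lambda>h. k * L h)"
    unfolding cbounded_on_def by blast
  moreover have "clinear_on Y (\<lambda>h. k * L h)"
    using cdual_clinear_on[OF assms] by (simp add: clinear_on_def distrib_left)
  ultimately show ?thesis
    by (simp add: cdual_def)
qed

lemma cdual_UNIV_bounded_linear:
  assumes "L \<in> cdual UNIV"
  shows "bounded_linear L"
proof -
  have lin: "clinear_on UNIV L"
    using assms by (rule cdual_clinear_on)
  obtain K where "K \<ge> 0" and K: "\<And>x. x \<in> UNIV \<Longrightarrow> cmod (L x) \<le> K * norm x"
    using cdual_bound[OF assms] by blast
  show ?thesis
  proof (rule bounded_linear_intro)
    show "L (x + y) = L x + L y" for x y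
      by (rule clinear_on_add[OF lin UNIV_I UNIV_I])
    show "L (r *\<^sub>R x) = r *\<^sub>R L x" for r x
      unfolding clinear_on_scaleR[OF lin UNIV_I] by (rule scaleR_conv_of_real[symmetric])
    show "norm (L x) \<le> norm x * K" for x
      using K[OF UNIV_I, of x] by (simp only: mult.commute)
  qed
qed

lemma csubspace_kernel:
  assumes "\<Phi> \<subseteq> cdual UNIV"
  shows "csubspace {x::'a::complex_normed_vector. \<forall>\<phi>\<in>\<Phi>. \<phi> x = 0}"
proof -
  have lin: "clinear_on UNIV \<phi>" and zero: "\<phi> 0 = 0" if "\<phi> \<in> \<Phi>" for \<phi>
    using assms that clinear_on_0[OF _ csubspace_UNIV] cdual_clinear_on by blast+
  show ?thesis
    unfolding csubspace_def
  proof (intro conjI ballI allI; clarsimp)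
    show "\<phi> 0 = 0" if "\<phi> \<in> \<Phi>" for \<phi>
      using zero[OF that] .
    show "\<phi> (x + y) = 0" if "\<forall>\<phi>\<in>\<Phi>. \<phi> x = 0" "\<forall>\<phi>\<in>\<Phi>. \<phi> y = 0" "\<phi> \<in> \<Phi>" for x y \<phi>
      using that clinear_on_add[OF lin[OF that(3)]] by auto
    show "\<phi> (c *\<^sub>C x) = 0" if "\<forall>\<phi>\<in>\<Phi>. \<phi> x = 0" "\<phi> \<in> \<Phi>" for c x \<phi>
      using that clinear_on_scaleC[OF lin[OF that(2)]] by auto
  qed
qed

lemma closed_kernel:
  assumes "\<Phi> \<subseteq> cdual UNIV"
  shows "closed {x::'a::complex_normed_vector. \<forall>\<phi>\<in>\<Phi>. \<phi> x = 0}"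
proof -
  have "closed {x::'a. \<phi> x = 0}" if "\<phi> \<in> \<Phi>" for \<phi>
    using assms that
    by (intro closed_Collect_eq continuous_on_const linear_continuous_on cdual_UNIV_bounded_linear) auto
  moreover have "{x::'a. \<forall>\<phi>\<in>\<Phi>. \<phi> x = 0} = (\<Inter>\<phi>\<in>\<Phi>. {x. \<phi> x = 0})"
    by auto
  ultimately show ?thesis
    by (simp add: closed_INT)
qed

lemma sum_scaleC_insert:
  fixes a :: "'a::complex_normed_vector"
  assumes "finite F"
  shows "\<exists>c'. d *\<^sub>C a + (\<Sum>b\<in>F. c b *\<^sub>C b) = (\<Sum>b\<in>insert a F. c' b *\<^sub>C b)"
proof (cases "a \<in> F")
  case True
  define c' where "c' = c(a := c a + d)"
  have "(\<Sum>b\<in>F - {a}. c' b *\<^sub>C b) = (\<Sum>b\<in>F - {a}. c b *\<^sub>C b)"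
    by (rule sum.cong) (auto simp: c'_def)
  then have "d *\<^sub>C a + (\<Sum>b\<in>F. c b *\<^sub>C b) = (\<Sum>b\<in>F. c' b *\<^sub>C b)"
    using sum.remove[OF assms True, of "\<lambda>b. c b *\<^sub>C b"] sum.remove[OF assms True, of "\<lambda>b. c' b *\<^sub>C b"]
    by (simp add: c'_def scaleC_add_left algebra_simps)
  then show ?thesis
    using True by (auto simp: insert_absorb)
next
  case False
  define c' where "c' = c(a := d)"
  have "(\<Sum>b\<in>F. c' b *\<^sub>C b) = (\<Sum>b\<in>F. c b *\<^sub>C b)"
    by (rule sum.cong) (use False in \<open>auto simp: c'_def\<close>)
  then have "d *\<^sub>C a + (\<Sum>b\<in>F. c b *\<^sub>C b) = (\<Sum>b\<in>insert a F. c' b *\<^sub>C b)"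
    using sum.insert[OF assms False, of "\<lambda>b. c' b *\<^sub>C b"] by (simp add: c'_def)
  then show ?thesis
    by blast
qed

lemma finite_codim_kernel_insert:
  fixes Y :: "'a::complex_normed_vector set"
  assumes Y: "csubspace Y" "finite_codim Y" and \<phi>: "clinear_on UNIV \<phi>"
  shows "finite_codim {y \<in> Y. \<phi> y = 0}"
proof (cases "\<forall>y\<in>Y. \<phi> y = 0")
  case True
  then show ?thesis
    using Y(2) by (simp add: Collect_conj_eq Int_absorb2 subset_iff)
next
  case False
  then obtain y1 where y1: "y1 \<in> Y" "\<phi> y1 \<noteq> 0"
    by auto
  define a where "a = (1 / \<phi> y1) *\<^sub>C y1"
  have a: "a \<in> Y" "\<phi> a = 1"
    using y1 csubspace_scaleC[OF Y(1)] clinear_on_scaleC[OF \<phi>, of y1 "1 / \<phi> y1"]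
    by (auto simp: a_def)
  obtain F where F: "finite F" "\<forall>x. \<exists>y\<in>Y. \<exists>c. x = y + (\<Sum>b\<in>F. c b *\<^sub>C b)"
    using Y(2) unfolding finite_codim_def by blast
  show ?thesis
    unfolding finite_codim_def
  proof (intro exI[of _ "insert a F"] conjI allI)
    show "finite (insert a F)"
      using F(1) by simp
    fix x
    obtain y c where yc: "y \<in> Y" "x = y + (\<Sum>b\<in>F. c b *\<^sub>C b)"
      using F(2) by blast
    define y' where "y' = y - \<phi> y *\<^sub>C a"
    have y': "y' \<in> Y" "\<phi> y' = 0"
      using Y(1) yc(1) a clinear_on_diff[OF \<phi> csubspace_UNIV] clinear_on_scaleC[OF \<phi>]
      by (auto simp: y'_def csubspace_diff csubspace_scaleC)
    obtain c' where c': "\<phi> y *\<^sub>C a + (\<Sum>b\<in>F. c b *\<^sub>C b) = (\<Sum>b\<in>insert a F. c' b *\<^sub>C b)"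
      using sum_scaleC_insert[OF F(1)] by blast
    have "x = y' + (\<Sum>b\<in>insert a F. c' b *\<^sub>C b)"
      unfolding yc(2) c'[symmetric] y'_def by (simp add: algebra_simps)
    then show "\<exists>y\<in>{y \<in> Y. \<phi> y = 0}. \<exists>c. x = y + (\<Sum>b\<in>insert a F. c b *\<^sub>C b)"
      using y' by blast
  qed
qed

lemma finite_codim_kernel:
  assumes "finite \<Phi>" "\<Phi> \<subseteq> cdual UNIV"
  shows "finite_codim {x::'a::complex_normed_vector. \<forall>\<phi>\<in>\<Phi>. \<phi> x = 0}"
  using assms
proof (induction \<Phi> rule: finite_induct)
  case empty
  show ?case
    unfolding finite_codim_def by (intro exI[of _ "{}"]) simp
next
  case (insert \<phi> \<Phi>)
  have "{x::'a. \<forall>\<psi>\<in>insert \<phi> \<Phi>. \<psi> x = 0} = {y \<in> {x. \<forall>\<psi>\<in>\<Phi>. \<psi> x = 0}. \<phi> y = 0}"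
    by auto
  then show ?case
    using insert finite_codim_kernel_insert[OF csubspace_kernel _ cdual_clinear_on] by auto
qed

lemma unit_ballD: "x \<in> unit_ball Y \<Longrightarrow> x \<in> Y" "x \<in> unit_ball Y \<Longrightarrow> norm x < 1"
  by (auto simp: unit_ball_def)

lemma AuD:
  assumes "g \<in> Au Y"
  shows "\<And>x. x \<notin> unit_ball Y \<Longrightarrow> g x = 0" "bounded (g ` unit_ball Y)"
    "uniformly_continuous_on (unit_ball Y) g" "holomorphic_rel Y (unit_ball Y) g"
  using assms unfolding Au_def by blast+

lemma holomorphic_relE:
  assumes "holomorphic_rel Y U g" "x \<in> U"
  obtains L where "L \<in> cdual Y"
    "((\<lambda>h. cmod (g (x + h) - g x - L h) / norm h) \<longlongrightarrow> 0) (at 0 within Y)"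
  using assms unfolding holomorphic_rel_def by blast

lemma eventually_unit_ball_at:
  assumes Y: "csubspace Y" and x: "x \<in> unit_ball Y"
  shows "\<forall>\<^sub>F h in at 0 within Y. x + h \<in> unit_ball Y"
  unfolding eventually_at
proof (intro exI[of _ "1 - norm x"] conjI ballI impI)
  show "1 - norm x > 0"
    using unit_ballD(2)[OF x] by simp
  fix h assume h: "h \<in> Y" "h \<noteq> 0 \<and> dist h 0 < 1 - norm x"
  then show "x + h \<in> unit_ball Y"
    using csubspace_add[OF Y unit_ballD(1)[OF x] h(1)] norm_triangle_ineq[of x h]
    by (simp add: unit_ball_def)
qed

lemma eventually_nonzero_at: "\<forall>\<^sub>F h in at (0::'a::real_normed_vector) within Y. h \<noteq> 0"
  by (simp add: eventually_at_filter)

lemma uniformly_continuous_on_restr: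
  "uniformly_continuous_on (unit_ball Y) (restr Y g) \<longleftrightarrow> uniformly_continuous_on (unit_ball Y) g"
  by (simp add: uniformly_continuous_on_def restr_def)

lemma uniformly_continuous_on_subset:
  fixes f :: "'a::metric_space \<Rightarrow> 'b::metric_space"
  shows "uniformly_continuous_on S f \<Longrightarrow> T \<subseteq> S \<Longrightarrow> uniformly_continuous_on T f"
  unfolding uniformly_continuous_on_def by (meson subset_iff)

lemma tendsto_Au_at:
  assumes Y: "csubspace Y" and g: "g \<in> Au Y" and x: "x \<in> unit_ball Y"
  shows "((\<lambda>h. g (x + h)) \<longlongrightarrow> g x) (at 0 within Y)"
proof (rule tendstoI)
  fix e :: real assume "e > 0"
  then obtain d where "d > 0" and d: "\<forall>x\<in>unit_ball Y. \<forall>x'\<in>unit_ball Y. dist x' x < d \<longrightarrow> dist (g x') (g x) < e"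
    using AuD(3)[OF g] unfolding uniformly_continuous_on_def by blast
  have "\<forall>\<^sub>F h in at 0 within Y. norm h < d"
    unfolding eventually_at using \<open>d > 0\<close> by (intro exI[of _ d]) auto
  then show "\<forall>\<^sub>F h in at 0 within Y. dist (g (x + h)) (g x) < e"
    using eventually_unit_ball_at[OF Y x] by eventually_elim (use d x in \<open>simp add: dist_norm\<close>)
qed

lemma Au_restr_const:
  assumes Y: "csubspace Y"
  shows "restr Y (\<lambda>_. k) \<in> Au Y"
  unfolding Au_def mem_Collect_eq
proof (intro conjI allI impI)
  show "restr Y (\<lambda>_. k) x = 0" if "x \<notin> unit_ball Y" for x
    using that by (simp add: restr_def)
  have "restr Y (\<lambda>_. k) ` unit_ball Y \<subseteq> {k}"
    by (auto simp: restr_def)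
  then show "bounded (restr Y (\<lambda>_. k) ` unit_ball Y)"
    by (meson bounded_subset finite_imp_bounded finite.intros)
  show "uniformly_continuous_on (unit_ball Y) (restr Y (\<lambda>_. k))"
    by (simp add: uniformly_continuous_on_restr uniformly_continuous_on_const)
  show "holomorphic_rel Y (unit_ball Y) (restr Y (\<lambda>_. k))"
    unfolding holomorphic_rel_def
  proof (intro ballI exI[of _ "\<lambda>_. 0"] conjI cdual_zero)
    fix x assume x: "x \<in> unit_ball Y"
    have "\<forall>\<^sub>F h in at 0 within Y. 0 = cmod (restr Y (\<lambda>_. k) (x + h) - restr Y (\<lambda>_. k) x - 0) / norm h"
      using eventually_unit_ball_at[OF Y x] by eventually_elim (use x in \<open>simp add: restr_def\<close>)
    then show "((\<lambda>h. cmod (restr Y (\<lambda>_. k) (x + h) - restr Y (\<lambda>_. k) x - 0) / norm h) \<longlongrightarrow> 0) (at 0 within Y)"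
      by (rule Lim_transform_eventually[OF tendsto_const])
  qed
qed

lemma Au_restr:
  assumes f: "restr UNIV f \<in> Au UNIV" and Y: "csubspace Y"
  shows "restr Y f \<in> Au Y"
  unfolding Au_def mem_Collect_eq
proof (intro conjI allI impI)
  have sub: "unit_ball Y \<subseteq> unit_ball UNIV"
    by (auto simp: unit_ball_def)
  have eq: "restr Y f x = restr UNIV f x" if "x \<in> unit_ball Y" for x
    using that sub by (auto simp: restr_def)
  show "restr Y f x = 0" if "x \<notin> unit_ball Y" for x
    using that by (simp add: restr_def)
  have "restr Y f ` unit_ball Y \<subseteq> restr UNIV f ` unit_ball UNIV"
    using sub eq by auto
  then show "bounded (restr Y f ` unit_ball Y)"
    using AuD(2)[OF f] bounded_subset by blast
  have "uniformly_continuous_on (unit_ball UNIV) f"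
    using AuD(3)[OF f] by (simp only: uniformly_continuous_on_restr)
  then show "uniformly_continuous_on (unit_ball Y) (restr Y f)"
    unfolding uniformly_continuous_on_restr by (rule uniformly_continuous_on_subset[OF _ sub])
  show "holomorphic_rel Y (unit_ball Y) (restr Y f)"
    unfolding holomorphic_rel_def
  proof
    fix x assume x: "x \<in> unit_ball Y"
    obtain L where L: "L \<in> cdual UNIV"
      "((\<lambda>h. cmod (restr UNIV f (x + h) - restr UNIV f x - L h) / norm h) \<longlongrightarrow> 0) (at 0)"
      using holomorphic_relE[OF AuD(4)[OF f]] x sub by blast
    have "((\<lambda>h. cmod (restr UNIV f (x + h) - restr UNIV f x - L h) / norm h) \<longlongrightarrow> 0) (at 0 within Y)"
      by (rule tendsto_within_subset[OF L(2)]) simp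
    moreover have "\<forall>\<^sub>F h in at 0 within Y. cmod (restr UNIV f (x + h) - restr UNIV f x - L h) / norm h
        = cmod (restr Y f (x + h) - restr Y f x - L h) / norm h"
      using eventually_unit_ball_at[OF Y x] by eventually_elim (use x eq in simp)
    ultimately have "((\<lambda>h. cmod (restr Y f (x + h) - restr Y f x - L h) / norm h) \<longlongrightarrow> 0) (at 0 within Y)"
      by (rule Lim_transform_eventually)
    then show "\<exists>L. L \<in> cdual Y \<and> ((\<lambda>h. cmod (restr Y f (x + h) - restr Y f x - L h) / norm h) \<longlongrightarrow> 0) (at 0 within Y)"
      using cdual_mono[OF subset_UNIV L(1)] by blast
  qed
qed

lemma Au_add:
  assumes g: "g \<in> Au Y" and k: "k \<in> Au Y"
  shows "(\<lambda>x. g x + k x) \<in> Au Y"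
  unfolding Au_def mem_Collect_eq
proof (intro conjI allI impI)
  show "g x + k x = 0" if "x \<notin> unit_ball Y" for x
    using that AuD(1)[OF g] AuD(1)[OF k] by simp
  show "bounded ((\<lambda>x. g x + k x) ` unit_ball Y)"
    using AuD(2)[OF g] AuD(2)[OF k] by (rule bounded_plus_comp)
  show "uniformly_continuous_on (unit_ball Y) (\<lambda>x. g x + k x)"
    using AuD(3)[OF g] AuD(3)[OF k] by (rule uniformly_continuous_on_add)
  show "holomorphic_rel Y (unit_ball Y) (\<lambda>x. g x + k x)"
    unfolding holomorphic_rel_def
  proof
    fix x assume x: "x \<in> unit_ball Y"
    obtain L1 where L1: "L1 \<in> cdual Y"
      "((\<lambda>h. cmod (g (x + h) - g x - L1 h) / norm h) \<longlongrightarrow> 0) (at 0 within Y)"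
      using holomorphic_relE[OF AuD(4)[OF g] x] by blast
    obtain L2 where L2: "L2 \<in> cdual Y"
      "((\<lambda>h. cmod (k (x + h) - k x - L2 h) / norm h) \<longlongrightarrow> 0) (at 0 within Y)"
      using holomorphic_relE[OF AuD(4)[OF k] x] by blast
    have "cmod (g (x + h) + k (x + h) - (g x + k x) - (L1 h + L2 h))
        \<le> cmod (g (x + h) - g x - L1 h) + cmod (k (x + h) - k x - L2 h)" for h
      using norm_triangle_ineq[of "g (x + h) - g x - L1 h" "k (x + h) - k x - L2 h"]
      by (simp add: algebra_simps)
    then have le: "cmod (g (x + h) + k (x + h) - (g x + k x) - (L1 h + L2 h)) / norm h
        \<le> cmod (g (x + h) - g x - L1 h) / norm h + cmod (k (x + h) - k x - L2 h) / norm h" for h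
      by (simp add: add_divide_distrib[symmetric] divide_right_mono)
    have "((\<lambda>h. cmod (g (x + h) + k (x + h) - (g x + k x) - (L1 h + L2 h)) / norm h) \<longlongrightarrow> 0) (at 0 within Y)"
    proof (rule tendsto_sandwich[OF _ _ tendsto_const])
      show "((\<lambda>h. cmod (g (x + h) - g x - L1 h) / norm h + cmod (k (x + h) - k x - L2 h) / norm h)
          \<longlongrightarrow> 0) (at 0 within Y)"
        using tendsto_add[OF L1(2) L2(2)] by simp
    qed (simp_all add: le)
    then show "\<exists>L. L \<in> cdual Y \<and> ((\<lambda>h. cmod (g (x + h) + k (x + h) - (g x + k x) - L h) / norm h) \<longlongrightarrow> 0) (at 0 within Y)"
      using cdual_add[OF L1(1) L2(1)] by blast
  qed
qed

text \<open>The remainder of \<open>1/b\<close> against its linearisation \<open>1/a - l/a\<^sup>2\<close> at \<open>a\<close>.\<close>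

lemma norm_inverse_remainder_le:
  fixes a b l :: complex
  assumes e: "e > 0" "e \<le> cmod a" "e \<le> cmod b"
  shows "cmod (1 / b - 1 / a + l / a^2) \<le> cmod (b - a - l) / e^2 + cmod l * cmod (b - a) / e^3"
proof -
  have a: "a \<noteq> 0" and b: "b \<noteq> 0" and pos: "cmod a > 0" "cmod b > 0"
    using e by auto
  have eq: "1 / b - 1 / a + l / a^2 = - (b - a - l) / (a * b) + l * (b - a) / (a^2 * b)"
    using a b by (simp add: field_simps power2_eq_square)
  have ab: "e^2 \<le> cmod a * cmod b"
    using e by (simp add: power2_eq_square mult_mono)
  have "e^2 * e \<le> cmod a ^ 2 * cmod b"
    using e by (intro mult_mono power_mono) auto
  then have aab: "e^3 \<le> cmod a ^ 2 * cmod b"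
    by (simp add: power3_eq_cube power2_eq_square mult.assoc)
  have "cmod (1 / b - 1 / a + l / a^2) \<le> cmod (- (b - a - l) / (a * b)) + cmod (l * (b - a) / (a^2 * b))"
    unfolding eq by (rule norm_triangle_ineq)
  also have "\<dots> = cmod (b - a - l) / (cmod a * cmod b) + cmod l * cmod (b - a) / (cmod a ^ 2 * cmod b)"
    by (simp only: norm_divide norm_mult norm_power norm_minus_cancel)
  also have "\<dots> \<le> cmod (b - a - l) / e^2 + cmod l * cmod (b - a) / e^3"
    using ab aab e pos by (intro add_mono divide_left_mono) auto
  finally show ?thesis .
qed

lemma uniformly_continuous_on_inverse:
  fixes g :: "'a::metric_space \<Rightarrow> complex"
  assumes g: "uniformly_continuous_on S g" and e: "e > 0" and ge: "\<And>y. y \<in> S \<Longrightarrow> e \<le> cmod (g y)"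
  shows "uniformly_continuous_on S (\<lambda>x. 1 / g x)"
  unfolding uniformly_continuous_on_def
proof (intro allI impI)
  fix r :: real assume "r > 0"
  then have "r * e^2 > 0"
    using e by simp
  then obtain d where "d > 0"
    and d: "\<forall>x\<in>S. \<forall>x'\<in>S. dist x' x < d \<longrightarrow> dist (g x') (g x) < r * e^2"
    using g unfolding uniformly_continuous_on_def by blast
  show "\<exists>d>0. \<forall>x\<in>S. \<forall>x'\<in>S. dist x' x < d \<longrightarrow> dist (1 / g x') (1 / g x) < r"
  proof (intro exI[of _ d] conjI ballI impI)
    fix x x' assume x: "x \<in> S" and x': "x' \<in> S" and dx: "dist x' x < d"
    have nz: "g x \<noteq> 0" "g x' \<noteq> 0"
      using ge[OF x] ge[OF x'] e by auto
    have "1 / g x' - 1 / g x = (g x - g x') / (g x' * g x)"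
      using nz by (simp add: field_simps)
    then have "dist (1 / g x') (1 / g x) = cmod (g x - g x') / (cmod (g x') * cmod (g x))"
      by (simp add: dist_norm norm_divide norm_mult)
    also have "\<dots> \<le> cmod (g x - g x') / e^2"
      using ge[OF x] ge[OF x'] e nz
      by (intro divide_left_mono) (auto simp: power2_eq_square intro: mult_mono)
    also have "\<dots> < r"
      using d x x' dx e by (simp add: dist_commute[of x'] dist_norm divide_less_eq)
    finally show "dist (1 / g x') (1 / g x) < r" .
  qed (rule \<open>d > 0\<close>)
qed

lemma holomorphic_rel_inverse:
  assumes Y: "csubspace Y" and g: "g \<in> Au Y"
    and e: "e > 0" and ge: "\<And>y. y \<in> unit_ball Y \<Longrightarrow> e \<le> cmod (g y)"
  shows "holomorphic_rel Y (unit_ball Y) (restr Y (\<lambda>x. 1 / g x))" (is "holomorphic_rel _ _ ?v")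
  unfolding holomorphic_rel_def
proof
  fix x assume x: "x \<in> unit_ball Y"
  obtain L where L: "L \<in> cdual Y" "((\<lambda>h. cmod (g (x + h) - g x - L h) / norm h) \<longlongrightarrow> 0) (at 0 within Y)"
    using holomorphic_relE[OF AuD(4)[OF g] x] by blast
  obtain K where "K \<ge> 0" and K: "\<And>h. h \<in> Y \<Longrightarrow> cmod (L h) \<le> K * norm h"
    using cdual_bound[OF L(1)] by blast
  define L' where "L' = (\<lambda>h. (- 1 / g x ^ 2) * L h)"
  have "((\<lambda>h. (cmod (g (x + h) - g x - L h) / norm h) / e^2) \<longlongrightarrow> 0 / e^2) (at 0 within Y)"
    by (intro tendsto_divide L(2) tendsto_const) (use e in simp)
  moreover have "((\<lambda>h. g (x + h) - g x) \<longlongrightarrow> g x - g x) (at 0 within Y)"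
    by (intro tendsto_diff tendsto_Au_at[OF Y g x] tendsto_const)
  then have "((\<lambda>h. K * cmod (g (x + h) - g x) / e^3) \<longlongrightarrow> K * 0 / e^3) (at 0 within Y)"
    by (intro tendsto_divide tendsto_mult tendsto_const tendsto_norm_zero) (use e in auto)
  ultimately have lim: "((\<lambda>h. (cmod (g (x + h) - g x - L h) / norm h) / e^2 + K * cmod (g (x + h) - g x) / e^3)
      \<longlongrightarrow> 0) (at 0 within Y)"
    using tendsto_add by fastforce
  have upper: "\<forall>\<^sub>F h in at 0 within Y. cmod (?v (x + h) - ?v x - L' h) / norm h
      \<le> (cmod (g (x + h) - g x - L h) / norm h) / e^2 + K * cmod (g (x + h) - g x) / e^3"
    using eventually_unit_ball_at[OF Y x] eventually_nonzero_at
  proof eventually_elim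
    case (elim h)
    have hY: "h \<in> Y"
      using csubspace_diff[OF Y unit_ballD(1)[OF elim(1)] unit_ballD(1)[OF x]] by simp
    have nh: "norm h > 0"
      using elim by simp
    have "?v (x + h) - ?v x - L' h = 1 / g (x + h) - 1 / g x + L h / g x ^ 2"
      using elim x by (simp add: restr_def L'_def)
    then have "cmod (?v (x + h) - ?v x - L' h)
        \<le> cmod (g (x + h) - g x - L h) / e^2 + cmod (L h) * cmod (g (x + h) - g x) / e^3"
      using norm_inverse_remainder_le[OF e ge[OF x] ge[OF elim(1)]] by simp
    also have "\<dots> \<le> cmod (g (x + h) - g x - L h) / e^2 + (K * norm h) * cmod (g (x + h) - g x) / e^3"
      using K[OF hY] e by (intro add_left_mono divide_right_mono mult_right_mono) auto
    finally have "cmod (?v (x + h) - ?v x - L' h) / norm h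
        \<le> (cmod (g (x + h) - g x - L h) / e^2 + (K * norm h) * cmod (g (x + h) - g x) / e^3) / norm h"
      using nh by (intro divide_right_mono) auto
    also have "\<dots> = (cmod (g (x + h) - g x - L h) / norm h) / e^2 + K * cmod (g (x + h) - g x) / e^3"
      using nh by (simp add: field_simps)
    finally show ?case .
  qed
  have "((\<lambda>h. cmod (?v (x + h) - ?v x - L' h) / norm h) \<longlongrightarrow> 0) (at 0 within Y)"
    by (rule tendsto_sandwich[OF _ upper tendsto_const lim]) simp
  then show "\<exists>L. L \<in> cdual Y \<and> ((\<lambda>h. cmod (?v (x + h) - ?v x - L h) / norm h) \<longlongrightarrow> 0) (at 0 within Y)"
    using cdual_cmult[OF L(1)] unfolding L'_def by blast
qed

lemma Au_inverse:
  assumes Y: "csubspace Y" and g: "g \<in> Au Y"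
    and e: "e > 0" and ge: "\<And>y. y \<in> unit_ball Y \<Longrightarrow> e \<le> cmod (g y)"
  shows "restr Y (\<lambda>x. 1 / g x) \<in> Au Y"
  unfolding Au_def mem_Collect_eq
proof (intro conjI allI impI holomorphic_rel_inverse[OF assms])
  show "restr Y (\<lambda>x. 1 / g x) x = 0" if "x \<notin> unit_ball Y" for x
    using that by (simp add: restr_def)
  have "cmod (restr Y (\<lambda>x. 1 / g x) y) \<le> 1 / e" if "y \<in> unit_ball Y" for y
  proof -
    have "1 / cmod (g y) \<le> 1 / e"
      using ge[OF that] e by (intro divide_left_mono mult_pos_pos) auto
    then show ?thesis
      using that by (simp add: restr_def norm_divide)
  qed
  then show "bounded (restr Y (\<lambda>x. 1 / g x) ` unit_ball Y)"
    unfolding bounded_iff by blast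
  show "uniformly_continuous_on (unit_ball Y) (restr Y (\<lambda>x. 1 / g x))"
    unfolding uniformly_continuous_on_restr
    by (rule uniformly_continuous_on_inverse[OF AuD(3)[OF g] e ge])
qed

lemma spectrum_AuD:
  assumes "\<tau> \<in> spectrum_Au Y"
  shows "\<And>g h. g \<in> Au Y \<Longrightarrow> h \<in> Au Y \<Longrightarrow> \<tau> (\<lambda>x. g x + h x) = \<tau> g + \<tau> h"
    "\<And>c g. g \<in> Au Y \<Longrightarrow> \<tau> (\<lambda>x. c * g x) = c * \<tau> g"
    "\<And>g h. g \<in> Au Y \<Longrightarrow> h \<in> Au Y \<Longrightarrow> \<tau> (\<lambda>x. g x * h x) = \<tau> g * \<tau> h"
    "\<exists>g\<in>Au Y. \<tau> g \<noteq> 0"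
  using assms unfolding spectrum_Au_def by blast+

lemma spectrum_Au_one:
  assumes Y: "csubspace Y" and \<tau>: "\<tau> \<in> spectrum_Au Y"
  shows "\<tau> (restr Y (\<lambda>_. 1)) = 1"
proof -
  obtain g where g: "g \<in> Au Y" "\<tau> g \<noteq> 0"
    using spectrum_AuD(4)[OF \<tau>] by blast
  have "(\<lambda>x. restr Y (\<lambda>_. 1) x * g x) = g"
    using AuD(1)[OF g(1)] by (auto simp: restr_def)
  moreover have "\<tau> (\<lambda>x. restr Y (\<lambda>_. 1) x * g x) = \<tau> (restr Y (\<lambda>_. 1)) * \<tau> g"
    by (rule spectrum_AuD(3)[OF \<tau> Au_restr_const[OF Y] g(1)])
  ultimately have "(\<tau> (restr Y (\<lambda>_. 1)) - 1) * \<tau> g = 0"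
    by (simp add: algebra_simps)
  then show ?thesis
    using g(2) by simp
qed

text \<open>If \<open>g\<close> stayed away from \<open>\<tau> g\<close> on \<open>B_Y\<close>, then \<open>g - \<tau> g\<close> would be invertible in
  \<open>A_u(B_Y)\<close> although \<open>\<tau>\<close> annihilates it.\<close>

lemma spectrum_Au_approx:
  assumes Y: "csubspace Y" and \<tau>: "\<tau> \<in> spectrum_Au Y" and g: "g \<in> Au Y" and e: "e > 0"
  shows "\<exists>y\<in>unit_ball Y. cmod (g y - \<tau> g) < e"
proof (rule ccontr)
  assume "\<not> ?thesis"
  then have ge: "e \<le> cmod (g y - \<tau> g)" if "y \<in> unit_ball Y" for y
    using that by (simp add: not_less)
  define one where "one = restr Y (\<lambda>_. 1::complex)"
  define m where "m = restr Y (\<lambda>_. - \<tau> g)"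
  define u where "u = (\<lambda>x. g x + m x)"
  have one: "one \<in> Au Y" and m: "m \<in> Au Y"
    unfolding one_def m_def by (simp_all add: Au_restr_const[OF Y])
  have u: "u \<in> Au Y"
    unfolding u_def by (rule Au_add[OF g m])
  have geu: "e \<le> cmod (u y)" if "y \<in> unit_ball Y" for y
    using ge[OF that] that by (simp add: u_def m_def restr_def)
  have "(\<lambda>x. u x * restr Y (\<lambda>x. 1 / u x) x) = one"
  proof
    fix x
    show "u x * restr Y (\<lambda>x. 1 / u x) x = one x"
      using geu[of x] e by (cases "x \<in> unit_ball Y") (auto simp: one_def restr_def)
  qed
  then have "\<tau> one = \<tau> u * \<tau> (restr Y (\<lambda>x. 1 / u x))"
    using spectrum_AuD(3)[OF \<tau> u Au_inverse[OF Y u e geu]] by simp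
  moreover have "m = (\<lambda>x. (- \<tau> g) * one x)"
    by (auto simp: m_def one_def restr_def)
  then have "\<tau> u = 0"
    using spectrum_AuD(1)[OF \<tau> g m] spectrum_AuD(2)[OF \<tau> one, of "- \<tau> g"]
      spectrum_Au_one[OF Y \<tau>]
    by (simp add: u_def one_def)
  moreover have "\<tau> one = 1"
    unfolding one_def by (rule spectrum_Au_one[OF Y \<tau>])
  ultimately show False
    by simp
qed

section \<open>Values of characters are weak cluster values\<close>

text \<open>The filter generated by the sets \<open>{x \<in> B. \<Phi> x = 0, |f x - c| < e}\<close>, for finite sets
  \<open>\<Phi>\<close> of functionals and \<open>e > 0\<close>, is a weakly null net along which \<open>f \<rightarrow> c\<close>.\<close>

lemma weak_cluster_0I:
  fixes f :: "'a::complex_normed_vector \<Rightarrow> complex"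
  assumes approx: "\<And>\<Phi> e. finite \<Phi> \<Longrightarrow> \<Phi> \<subseteq> cdual UNIV \<Longrightarrow> e > 0 \<Longrightarrow>
      \<exists>x\<in>ball 0 1. (\<forall>\<phi>\<in>\<Phi>. \<phi> x = 0) \<and> cmod (f x - c) < e"
  shows "c \<in> weak_cluster_0 f"
proof -
  define I where "I = {(\<Phi>, e). finite \<Phi> \<and> \<Phi> \<subseteq> cdual (UNIV::'a set) \<and> (e::real) > 0}"
  define S where "S = (\<lambda>(\<Phi>::('a \<Rightarrow> complex) set, e::real).
    {x::'a. x \<in> ball 0 1 \<and> (\<forall>\<phi>\<in>\<Phi>. \<phi> x = 0) \<and> cmod (f x - c) < e})"
  define F where "F = (INF i\<in>I. principal (S i))"
  have I: "({}, 1) \<in> I" "\<And>\<phi>. \<phi> \<in> cdual UNIV \<Longrightarrow> ({\<phi>}, 1) \<in> I" "\<And>r. r > 0 \<Longrightarrow> ({}, r) \<in> I"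
    unfolding I_def by auto
  have directed: "\<exists>k\<in>I. principal (S k) \<le> inf (principal (S i)) (principal (S j))"
    if "i \<in> I" "j \<in> I" for i j
  proof -
    obtain \<Phi>1 e1 \<Phi>2 e2 where ij: "i = (\<Phi>1, e1)" "j = (\<Phi>2, e2)"
      by (cases i, cases j) auto
    have "(\<Phi>1 \<union> \<Phi>2, min e1 e2) \<in> I"
      using that unfolding ij I_def by auto
    moreover have "S (\<Phi>1 \<union> \<Phi>2, min e1 e2) \<subseteq> S i \<inter> S j"
      unfolding ij S_def by auto
    ultimately show ?thesis
      by (intro bexI[of _ "(\<Phi>1 \<union> \<Phi>2, min e1 e2)"]) auto
  qed
  have ev: "eventually P F \<longleftrightarrow> (\<exists>i\<in>I. \<forall>x\<in>S i. P x)" for P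
    using eventually_INF_base[of I "\<lambda>i. principal (S i)" P, OF _ directed] I(1)
    by (auto simp: F_def eventually_principal)
  have "S i \<noteq> {}" if "i \<in> I" for i
  proof -
    obtain \<Phi> e where i: "i = (\<Phi>, e)"
      by (cases i)
    then have "finite \<Phi>" "\<Phi> \<subseteq> cdual UNIV" "e > 0"
      using that by (auto simp: I_def)
    then show ?thesis
      using approx unfolding i S_def by blast
  qed
  then have "F \<noteq> bot"
    unfolding trivial_limit_def ev by blast
  moreover have "eventually (\<lambda>x. x \<in> ball 0 1) F"
    unfolding ev using I(1) by (intro bexI[of _ "({}, 1)"]) (auto simp: S_def)
  moreover have "(\<phi> \<longlongrightarrow> 0) F" if "\<phi> \<in> cdual UNIV" for \<phi>
  proof (rule tendstoI)
    fix r :: real assume "r > 0"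
    show "eventually (\<lambda>x. dist (\<phi> x) 0 < r) F"
      unfolding ev using I(2)[OF that] \<open>r > 0\<close> by (intro bexI[of _ "({\<phi>}, 1)"]) (auto simp: S_def)
  qed
  moreover have "(f \<longlongrightarrow> c) F"
  proof (rule tendstoI)
    fix r :: real assume "r > 0"
    show "eventually (\<lambda>x. dist (f x) c < r) F"
      unfolding ev using I(3)[OF \<open>r > 0\<close>] by (intro bexI[of _ "({}, r)"]) (auto simp: S_def dist_norm)
  qed
  ultimately show ?thesis
    unfolding weak_cluster_0_def by blast
qed

lemma weak_cluster_0_if_M0_values:
  fixes f :: "'a::complex_normed_vector \<Rightarrow> complex"
  assumes f: "restr UNIV f \<in> Au UNIV"
    and c: "\<And>Y. csubspace Y \<Longrightarrow> closed Y \<Longrightarrow> finite_codim Y \<Longrightarrow> c \<in> (\<lambda>\<tau>. \<tau> (restr Y f)) ` M0 Y"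
  shows "c \<in> weak_cluster_0 f"
proof (rule weak_cluster_0I)
  fix \<Phi> :: "('a \<Rightarrow> complex) set" and e :: real
  assume \<Phi>: "finite \<Phi>" "\<Phi> \<subseteq> cdual UNIV" and "e > 0"
  define Y :: "'a set" where "Y = {x. \<forall>\<phi>\<in>\<Phi>. \<phi> x = 0}"
  have Y: "csubspace Y"
    unfolding Y_def by (rule csubspace_kernel[OF \<Phi>(2)])
  obtain \<tau> where "\<tau> \<in> M0 Y" and c_eq: "c = \<tau> (restr Y f)"
    using c[OF Y] closed_kernel[OF \<Phi>(2)] finite_codim_kernel[OF \<Phi>] unfolding Y_def by blast
  then have "\<tau> \<in> spectrum_Au Y"
    by (simp add: M0_def)
  then obtain y where "y \<in> unit_ball Y" "cmod (restr Y f y - c) < e"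
    using spectrum_Au_approx[OF Y _ Au_restr[OF f Y] \<open>e > 0\<close>] c_eq by blast
  then show "\<exists>x\<in>ball 0 1. (\<forall>\<phi>\<in>\<Phi>. \<phi> x = 0) \<and> cmod (f x - c) < e"
    by (auto simp: Y_def unit_ball_def restr_def)
qed

section \<open>Adjoining one vector to a closed subspace\<close>

definition cextend :: "'a::complex_normed_vector set \<Rightarrow> 'a \<Rightarrow> 'a set" where
  "cextend Y a = {y + s *\<^sub>C a | y s. y \<in> Y}"

definition cextend_coeff :: "'a::complex_normed_vector set \<Rightarrow> 'a \<Rightarrow> 'a \<Rightarrow> complex" where
  "cextend_coeff Y a z = (THE s. \<exists>y\<in>Y. z = y + s *\<^sub>C a)"

lemma cextendI: "y \<in> Y \<Longrightarrow> y + s *\<^sub>C a \<in> cextend Y a"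
  unfolding cextend_def by blast

lemma cextendE:
  assumes "z \<in> cextend Y a"
  obtains y s where "y \<in> Y" "z = y + s *\<^sub>C a"
  using assms unfolding cextend_def by blast

lemma cextend_coeff_unique:
  assumes Y: "csubspace Y" and a: "a \<notin> Y" and y: "y1 \<in> Y" "y2 \<in> Y"
    and eq: "y1 + s1 *\<^sub>C a = y2 + s2 *\<^sub>C a"
  shows "s1 = s2"
proof (rule ccontr)
  assume ne: "s1 \<noteq> s2"
  have "(s1 - s2) *\<^sub>C a = y2 - y1"
    using eq unfolding scaleC_diff_left by (simp add: algebra_simps eq_diff_eq)
  then have "(1 / (s1 - s2)) *\<^sub>C ((s1 - s2) *\<^sub>C a) \<in> Y"
    using csubspace_scaleC[OF Y csubspace_diff[OF Y y(2) y(1)]] by simp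
  then show False
    using ne a by (simp add: scaleC_scaleC scaleC_one)
qed

lemma cextend_coeff_eq:
  assumes Y: "csubspace Y" and a: "a \<notin> Y" and y: "y \<in> Y"
  shows "cextend_coeff Y a (y + s *\<^sub>C a) = s"
  unfolding cextend_coeff_def
proof (rule the_equality)
  show "\<exists>y'\<in>Y. y + s *\<^sub>C a = y' + s *\<^sub>C a"
    using y by blast
  show "s' = s" if "\<exists>y'\<in>Y. y + s *\<^sub>C a = y' + s' *\<^sub>C a" for s'
    using that cextend_coeff_unique[OF Y a y] by (metis (no_types))
qed

lemma csubspace_cextend:
  assumes Y: "csubspace Y"
  shows "csubspace (cextend Y a)"
  unfolding csubspace_def
proof (intro conjI ballI allI)
  show "0 \<in> cextend Y a"
    using cextendI[OF csubspace_0[OF Y], of 0 a] by simp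
next
  fix x y assume "x \<in> cextend Y a" "y \<in> cextend Y a"
  then obtain y1 s1 y2 s2 where "y1 \<in> Y" "x = y1 + s1 *\<^sub>C a" "y2 \<in> Y" "y = y2 + s2 *\<^sub>C a"
    by (metis cextendE)
  then show "x + y \<in> cextend Y a"
    using cextendI[OF csubspace_add[OF Y], of y1 y2 "s1 + s2" a]
    by (simp add: scaleC_add_left algebra_simps)
next
  fix c x assume "x \<in> cextend Y a"
  then obtain y1 s1 where "y1 \<in> Y" "x = y1 + s1 *\<^sub>C a"
    by (rule cextendE)
  then show "c *\<^sub>C x \<in> cextend Y a"
    using cextendI[OF csubspace_scaleC[OF Y], of y1 c "c * s1" a]
    by (simp add: scaleC_add_right scaleC_scaleC)
qed

lemma clinear_on_cextend_coeff:
  assumes Y: "csubspace Y" and a: "a \<notin> Y"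
  shows "clinear_on (cextend Y a) (cextend_coeff Y a)"
  unfolding clinear_on_def
proof (intro conjI ballI allI)
  fix x y assume "x \<in> cextend Y a" "y \<in> cextend Y a"
  then obtain y1 s1 y2 s2 where yy: "y1 \<in> Y" "x = y1 + s1 *\<^sub>C a" "y2 \<in> Y" "y = y2 + s2 *\<^sub>C a"
    by (metis cextendE)
  have "x + y = (y1 + y2) + (s1 + s2) *\<^sub>C a"
    using yy by (simp add: scaleC_add_left algebra_simps)
  then have "cextend_coeff Y a (x + y) = s1 + s2"
    using cextend_coeff_eq[OF Y a csubspace_add[OF Y yy(1,3)]] by simp
  then show "cextend_coeff Y a (x + y) = cextend_coeff Y a x + cextend_coeff Y a y"
    using yy cextend_coeff_eq[OF Y a] by simp
next
  fix c x assume "x \<in> cextend Y a"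
  then obtain y1 s1 where yy: "y1 \<in> Y" "x = y1 + s1 *\<^sub>C a"
    by (rule cextendE)
  have "c *\<^sub>C x = c *\<^sub>C y1 + (c * s1) *\<^sub>C a"
    using yy by (simp add: scaleC_add_right scaleC_scaleC)
  then have "cextend_coeff Y a (c *\<^sub>C x) = c * s1"
    using cextend_coeff_eq[OF Y a csubspace_scaleC[OF Y yy(1)]] by simp
  then show "cextend_coeff Y a (c *\<^sub>C x) = c * cextend_coeff Y a x"
    using yy cextend_coeff_eq[OF Y a] by simp
qed

lemma cextend_coeff_bound:
  assumes Y: "csubspace Y" and a: "a \<notin> Y" and z: "z \<in> cextend Y a"
  shows "cmod (cextend_coeff Y a z) * infdist a Y \<le> norm z"
proof -
  obtain y s where ys: "y \<in> Y" "z = y + s *\<^sub>C a"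
    using z by (rule cextendE)
  have coeff: "cextend_coeff Y a z = s"
    using cextend_coeff_eq[OF Y a ys(1)] ys(2) by simp
  show ?thesis
  proof (cases "s = 0")
    case True
    then show ?thesis
      using coeff by simp
  next
    case False
    define y' where "y' = (- 1 / s) *\<^sub>C y"
    have "y' \<in> Y"
      unfolding y'_def using csubspace_scaleC[OF Y ys(1)] .
    moreover have "z = s *\<^sub>C (a - y')"
      unfolding ys(2) y'_def using False
      by (simp add: scaleC_diff_right scaleC_scaleC scaleC_one scaleC_minus1 add.commute)
    ultimately show ?thesis
      using coeff infdist_le[of y' Y a] by (simp add: norm_scaleC dist_norm mult_left_mono)
  qed
qed

lemma closed_cextend:
  fixes a :: "'a::{complex_normed_vector, complete_space}"
  assumes Y: "csubspace Y" "closed Y" and a: "a \<notin> Y"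
  shows "closed (cextend Y a)"
  unfolding closed_sequential_limits
proof (intro allI impI, elim conjE)
  fix x l assume x: "\<forall>n. x n \<in> cextend Y a" and xl: "x \<longlonglongrightarrow> l"
  define \<delta> where "\<delta> = infdist a Y"
  have \<delta>: "\<delta> > 0"
    unfolding \<delta>_def using infdist_pos_not_in_closed[OF Y(2) _ a] csubspace_0[OF Y(1)] by auto
  define s where "s = (\<lambda>n. cextend_coeff Y a (x n))"
  \<comment> \<open>the coefficients form a Cauchy sequence because \<open>|coeff z| \<le> \<parallel>z\<parallel> / dist a Y\<close>\<close>
  have s_diff: "cmod (s n - s m) \<le> norm (x n - x m) / \<delta>" for n m
  proof -
    have "s n - s m = cextend_coeff Y a (x n - x m)"
      unfolding s_def using clinear_on_diff[OF clinear_on_cextend_coeff[OF Y(1) a] csubspace_cextend[OF Y(1)]] x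
      by simp
    moreover have "cmod (cextend_coeff Y a (x n - x m)) * \<delta> \<le> norm (x n - x m)"
      unfolding \<delta>_def using cextend_coeff_bound[OF Y(1) a] csubspace_diff[OF csubspace_cextend[OF Y(1)]] x
      by blast
    ultimately show ?thesis
      using \<delta> by (simp add: pos_le_divide_eq)
  qed
  have "Cauchy s"
  proof (rule CauchyI)
    fix e :: real assume "e > 0"
    then obtain M where M: "\<forall>m\<ge>M. \<forall>n\<ge>M. norm (x m - x n) < e * \<delta>"
      using CauchyD[OF LIMSEQ_imp_Cauchy[OF xl], of "e * \<delta>"] \<delta> by auto
    show "\<exists>M. \<forall>m\<ge>M. \<forall>n\<ge>M. norm (s m - s n) < e"
      using M s_diff \<delta> by (meson le_less_trans pos_divide_less_eq)
  qed
  then obtain s0 where s0: "s \<longlonglongrightarrow> s0"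
    using Cauchy_convergent_iff convergent_def by blast
  have "x n - s n *\<^sub>C a \<in> Y" for n
  proof -
    obtain y t where yt: "y \<in> Y" "x n = y + t *\<^sub>C a"
      using x by (meson cextendE)
    then show ?thesis
      unfolding s_def using cextend_coeff_eq[OF Y(1) a] by simp
  qed
  moreover have "(\<lambda>n. x n - s n *\<^sub>C a) \<longlonglongrightarrow> l - s0 *\<^sub>C a"
    by (intro tendsto_diff xl tendsto_scaleC_left s0)
  ultimately have "l - s0 *\<^sub>C a \<in> Y"
    by (rule closed_sequentially[OF Y(2)])
  then show "l \<in> cextend Y a"
    using cextendI[of "l - s0 *\<^sub>C a" Y s0 a] by simp
qed

section \<open>Linear maps into subspaces of finite codimension\<close>

definition clinear_map :: "('a::complex_normed_vector \<Rightarrow> 'a) \<Rightarrow> bool" where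
  "clinear_map P \<longleftrightarrow> (\<forall>x y. P (x + y) = P x + P y) \<and> (\<forall>c x. P (c *\<^sub>C x) = c *\<^sub>C P x)"

text \<open>Domination of the defect by finitely many functionals makes it vanish along every
  weakly null net.\<close>

definition dominated_map_into :: "'a::complex_normed_vector set \<Rightarrow> ('a \<Rightarrow> 'a) \<Rightarrow> bool" where
  "dominated_map_into Y P \<longleftrightarrow> clinear_map P \<and> (\<forall>x. P x \<in> Y) \<and>
     (\<exists>\<Phi> K. finite \<Phi> \<and> \<Phi> \<subseteq> cdual UNIV \<and> K \<ge> 0 \<and> (\<forall>x. norm (x - P x) \<le> K * (\<Sum>\<phi>\<in>\<Phi>. cmod (\<phi> x))))"

lemma sum_cmod_cdual_bound:
  assumes "finite \<Phi>" "\<Phi> \<subseteq> cdual (UNIV::'a::complex_normed_vector set)"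
  shows "\<exists>M\<ge>0. \<forall>x::'a. (\<Sum>\<phi>\<in>\<Phi>. cmod (\<phi> x)) \<le> M * norm x"
  using assms
proof (induction \<Phi> rule: finite_induct)
  case empty
  show ?case
    by (intro exI[of _ 0]) simp
next
  case (insert \<phi> \<Phi>)
  obtain M where M: "M \<ge> 0" "\<forall>x::'a. (\<Sum>\<phi>\<in>\<Phi>. cmod (\<phi> x)) \<le> M * norm x"
    using insert by auto
  obtain K where "K \<ge> 0" and K: "\<And>x. x \<in> UNIV \<Longrightarrow> cmod (\<phi> x) \<le> K * norm x"
    using cdual_bound[of \<phi> UNIV] insert.prems by blast
  have "(\<Sum>\<phi>\<in>insert \<phi> \<Phi>. cmod (\<phi> x)) \<le> (K + M) * norm x" for x :: 'a
    using insert.hyps add_mono[OF K[OF UNIV_I] M(2)[rule_format]] by (simp add: distrib_right)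
  then show ?case
    using \<open>K \<ge> 0\<close> M(1) by (intro exI[of _ "K + M"]) auto
qed

lemma dominated_map_into_bound:
  assumes "dominated_map_into Y P"
  obtains C where "C \<ge> 0" "\<And>x. norm (P x) \<le> C * norm x"
proof -
  obtain \<Phi> K where \<Phi>: "finite \<Phi>" "\<Phi> \<subseteq> cdual UNIV" "K \<ge> 0"
    and defect: "\<And>x. norm (x - P x) \<le> K * (\<Sum>\<phi>\<in>\<Phi>. cmod (\<phi> x))"
    using assms unfolding dominated_map_into_def by blast
  obtain M where M: "M \<ge> 0" "\<And>x. (\<Sum>\<phi>\<in>\<Phi>. cmod (\<phi> x)) \<le> M * norm x"
    using sum_cmod_cdual_bound[OF \<Phi>(1,2)] by blast
  have "norm (P x) \<le> (1 + K * M) * norm x" for x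
  proof -
    have "norm (P x) \<le> norm x + norm (x - P x)"
      using norm_triangle_ineq4[of x "x - P x"] by simp
    also have "\<dots> \<le> norm x + K * (M * norm x)"
      using defect[of x] mult_left_mono[OF M(2) \<Phi>(3), of x] by simp
    finally show ?thesis
      by (simp add: algebra_simps)
  qed
  moreover have "0 \<le> 1 + K * M"
    using \<Phi>(3) M(1) by simp
  ultimately show thesis
    using that by blast
qed

lemma cdual_cextend_coeff_comp:
  assumes Y: "csubspace Y" "closed Y" and a: "a \<notin> Y"
    and P: "clinear_map P" "\<And>x. P x \<in> cextend Y a" and C: "\<And>x. norm (P x) \<le> C * norm x"
  shows "(\<lambda>x. cextend_coeff Y a (P x)) \<in> cdual UNIV"
proof -
  have lin: "clinear_on (cextend Y a) (cextend_coeff Y a)"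
    by (rule clinear_on_cextend_coeff[OF Y(1) a])
  have \<delta>: "infdist a Y > 0"
    using infdist_pos_not_in_closed[OF Y(2) _ a] csubspace_0[OF Y(1)] by auto
  have "cmod (cextend_coeff Y a (P x)) * infdist a Y \<le> C * norm x" for x
    using cextend_coeff_bound[OF Y(1) a P(2), of x] C[of x] by linarith
  then have "cmod (cextend_coeff Y a (P x)) \<le> (C / infdist a Y) * norm x" for x
    using \<delta> by (simp add: field_simps)
  then have "cbounded_on UNIV (\<lambda>x. cextend_coeff Y a (P x))"
    unfolding cbounded_on_def by blast
  moreover have "clinear_on UNIV (\<lambda>x. cextend_coeff Y a (P x))"
    using P(1) clinear_on_add[OF lin P(2) P(2)] clinear_on_scaleC[OF lin P(2)]
    unfolding clinear_map_def clinear_on_def by simp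
  ultimately show ?thesis
    by (simp add: cdual_def)
qed

text \<open>From a dominated map \<open>P\<^sub>Z\<close> into \<open>Z = Y \<oplus> \<complex>a\<close>, subtracting the \<open>a\<close>-component gives
  a dominated map into \<open>Y\<close>; the coefficient of \<open>a\<close> becomes one more controlling functional.\<close>

lemma dominated_map_into_cextend:
  assumes Y: "csubspace Y" "closed Y" and a: "a \<notin> Y"
    and PZ: "dominated_map_into (cextend Y a) PZ"
  shows "\<exists>P. dominated_map_into Y P"
proof -
  obtain \<Phi> K where \<Phi>: "finite \<Phi>" "\<Phi> \<subseteq> cdual UNIV" "K \<ge> 0"
    and defect: "\<And>x. norm (x - PZ x) \<le> K * (\<Sum>\<phi>\<in>\<Phi>. cmod (\<phi> x))"
    using PZ unfolding dominated_map_into_def by blast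
  have PZ_lin: "clinear_map PZ" and PZ_into: "\<And>x. PZ x \<in> cextend Y a"
    using PZ unfolding dominated_map_into_def by blast+
  obtain C where "\<And>x. norm (PZ x) \<le> C * norm x"
    using dominated_map_into_bound[OF PZ] by blast
  define \<psi> where "\<psi> = (\<lambda>x. cextend_coeff Y a (PZ x))"
  define P where "P = (\<lambda>x. PZ x - \<psi> x *\<^sub>C a)"
  have \<psi>: "\<psi> \<in> cdual UNIV"
    unfolding \<psi>_def by (rule cdual_cextend_coeff_comp[OF Y a PZ_lin PZ_into]) fact
  have \<psi>_lin: "\<psi> (x + y) = \<psi> x + \<psi> y" "\<psi> (c *\<^sub>C x) = c * \<psi> x" for x y c
    using clinear_on_add[OF cdual_clinear_on[OF \<psi>]] clinear_on_scaleC[OF cdual_clinear_on[OF \<psi>]] by simp_all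
  have PZ_lin': "PZ (x + y) = PZ x + PZ y" "PZ (c *\<^sub>C x) = c *\<^sub>C PZ x" for x y c
    using PZ_lin unfolding clinear_map_def by blast+
  have "clinear_map P"
    unfolding clinear_map_def
  proof (intro conjI allI)
    show "P (x + y) = P x + P y" for x y
      unfolding P_def PZ_lin' \<psi>_lin by (simp add: scaleC_add_left)
    show "P (c *\<^sub>C x) = c *\<^sub>C P x" for c x
      unfolding P_def PZ_lin' \<psi>_lin by (simp add: scaleC_diff_right scaleC_scaleC)
  qed
  moreover have "P x \<in> Y" for x
  proof -
    obtain y s where ys: "y \<in> Y" "PZ x = y + s *\<^sub>C a"
      using PZ_into[of x] by (rule cextendE)
    then show ?thesis
      using cextend_coeff_eq[OF Y(1) a ys(1)] by (simp add: P_def \<psi>_def)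
  qed
  moreover have "norm (x - P x) \<le> (K + norm a) * (\<Sum>\<phi>\<in>insert \<psi> \<Phi>. cmod (\<phi> x))" for x
  proof -
    define S where "S = (\<Sum>\<phi>\<in>insert \<psi> \<Phi>. cmod (\<phi> x))"
    have S: "(\<Sum>\<phi>\<in>\<Phi>. cmod (\<phi> x)) \<le> S" "cmod (\<psi> x) \<le> S"
      unfolding S_def using \<Phi>(1) by (auto intro: sum_mono2 member_le_sum)
    have xP: "x - P x = (x - PZ x) + \<psi> x *\<^sub>C a"
      by (simp add: P_def)
    have "norm (x - P x) \<le> norm (x - PZ x) + cmod (\<psi> x) * norm a"
      unfolding xP norm_scaleC[symmetric] by (rule norm_triangle_ineq)
    also have "\<dots> \<le> K * S + S * norm a"
      using defect[of x] mult_left_mono[OF S(1) \<Phi>(3)] mult_right_mono[OF S(2) norm_ge_zero]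
      by (intro add_mono) auto
    finally show ?thesis
      unfolding S_def by (simp add: algebra_simps)
  qed
  ultimately have "dominated_map_into Y P"
    unfolding dominated_map_into_def using \<Phi> \<psi> by (intro conjI exI[of _ "insert \<psi> \<Phi>"] exI[of _ "K + norm a"]) auto
  then show ?thesis
    by blast
qed

lemma dominated_map_into_exists_aux:
  fixes F :: "'a::{complex_normed_vector, complete_space} set"
  assumes "finite F"
  shows "csubspace Y \<Longrightarrow> closed Y \<Longrightarrow> \<forall>x. \<exists>y\<in>Y. \<exists>c. x = y + (\<Sum>b\<in>F. c b *\<^sub>C b) \<Longrightarrow>
    \<exists>P. dominated_map_into Y P"
  using assms
proof (induction F arbitrary: Y rule: finite_induct)
  case empty
  then have "\<And>x. x \<in> Y"
    by auto
  then have "dominated_map_into Y (\<lambda>x. x)"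
    unfolding dominated_map_into_def clinear_map_def by (intro conjI exI[of _ "{}"] exI[of _ 0]) auto
  then show ?case
    by blast
next
  case (insert a F)
  have rep: "\<exists>y\<in>Y. \<exists>c. x = (y + c a *\<^sub>C a) + (\<Sum>b\<in>F. c b *\<^sub>C b)" for x
  proof -
    obtain y c where "y \<in> Y" "x = y + (\<Sum>b\<in>insert a F. c b *\<^sub>C b)"
      using insert.prems(3) by blast
    then show ?thesis
      using insert.hyps by (auto simp: add.assoc)
  qed
  show ?case
  proof (cases "a \<in> Y")
    case True
    have "\<exists>y\<in>Y. \<exists>c. x = y + (\<Sum>b\<in>F. c b *\<^sub>C b)" for x
    proof -
      obtain y c where "y \<in> Y" "x = (y + c a *\<^sub>C a) + (\<Sum>b\<in>F. c b *\<^sub>C b)"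
        using rep by blast
      moreover have "y + c a *\<^sub>C a \<in> Y"
        using csubspace_add[OF insert.prems(1) \<open>y \<in> Y\<close> csubspace_scaleC[OF insert.prems(1) True]] .
      ultimately show ?thesis
        by blast
    qed
    then show ?thesis
      using insert.IH insert.prems(1,2) by blast
  next
    case False
    have "\<exists>z\<in>cextend Y a. \<exists>c. x = z + (\<Sum>b\<in>F. c b *\<^sub>C b)" for x
    proof -
      obtain y c where "y \<in> Y" "x = (y + c a *\<^sub>C a) + (\<Sum>b\<in>F. c b *\<^sub>C b)"
        using rep by blast
      then show ?thesis
        using cextendI[of y Y "c a" a] by blast
    qed
    then obtain PZ where "dominated_map_into (cextend Y a) PZ"
      using insert.IH csubspace_cextend[OF insert.prems(1)] closed_cextend[OF insert.prems(1,2) False]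
      by blast
    then show ?thesis
      using dominated_map_into_cextend[OF insert.prems(1,2) False] by blast
  qed
qed

lemma dominated_map_into_exists:
  fixes Y :: "'a::{complex_normed_vector, complete_space} set"
  assumes "csubspace Y" "closed Y" "finite_codim Y"
  obtains P where "dominated_map_into Y P"
  using assms dominated_map_into_exists_aux unfolding finite_codim_def by blast

section \<open>Weak cluster values are values of characters\<close>

lemma cdual_comp_dominated_map:
  assumes P: "dominated_map_into Y P" and z: "z \<in> cdual Y"
  shows "(\<lambda>x. z (P x)) \<in> cdual UNIV"
proof -
  have zl: "clinear_on Y z" and PY: "\<And>x. P x \<in> Y"
    using z P by (simp_all add: cdual_def dominated_map_into_def)
  have Pl: "P (x + y) = P x + P y" "P (c *\<^sub>C x) = c *\<^sub>C P x" for x y c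
    using P unfolding dominated_map_into_def clinear_map_def by blast+
  obtain Kz where "Kz \<ge> 0" and Kz: "\<And>x. x \<in> Y \<Longrightarrow> cmod (z x) \<le> Kz * norm x"
    using cdual_bound[OF z] by blast
  obtain C where C: "\<And>x. norm (P x) \<le> C * norm x"
    using dominated_map_into_bound[OF P] by blast
  have "cmod (z (P x)) \<le> (Kz * C) * norm x" for x
    using Kz[OF PY, of x] mult_left_mono[OF C \<open>Kz \<ge> 0\<close>, of x] by (simp add: mult.assoc)
  then have "cbounded_on UNIV (\<lambda>x. z (P x))"
    unfolding cbounded_on_def by blast
  moreover have "clinear_on UNIV (\<lambda>x. z (P x))"
    unfolding clinear_on_def Pl using clinear_on_add[OF zl PY PY] clinear_on_scaleC[OF zl PY] by simp
  ultimately show ?thesis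
    by (simp add: cdual_def)
qed

lemma tendsto_dominated_map_defect:
  assumes P: "dominated_map_into Y P" and weak: "\<forall>\<phi>\<in>cdual UNIV. (\<phi> \<longlongrightarrow> 0) F"
  shows "((\<lambda>x. norm (x - P x)) \<longlongrightarrow> 0) F"
proof -
  obtain \<Phi> K where \<Phi>: "finite \<Phi>" "\<Phi> \<subseteq> cdual UNIV"
    and defect: "\<And>x. norm (x - P x) \<le> K * (\<Sum>\<phi>\<in>\<Phi>. cmod (\<phi> x))"
    using P unfolding dominated_map_into_def by blast
  have "((\<lambda>x. \<Sum>\<phi>\<in>\<Phi>. cmod (\<phi> x)) \<longlongrightarrow> (\<Sum>\<phi>\<in>\<Phi>. 0)) F"
    using \<Phi>(2) weak by (intro tendsto_sum tendsto_norm_zero) auto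
  then have "((\<lambda>x. K * (\<Sum>\<phi>\<in>\<Phi>. cmod (\<phi> x))) \<longlongrightarrow> 0) F"
    by (simp add: tendsto_mult_right_zero)
  from tendsto_sandwich[OF _ _ tendsto_const this] show ?thesis
    by (simp add: defect)
qed

lemma shrink_into_unit_ball:
  assumes Y: "csubspace Y" and p: "p \<in> Y" and x: "norm x < 1"
  defines "w \<equiv> (1 / (1 + norm (x - p))) *\<^sub>R p"
  shows "w \<in> unit_ball Y" "norm (w - x) \<le> 2 * norm (x - p)"
proof -
  define d where "d = norm (x - p)"
  have d: "d \<ge> 0" and p_le: "norm p \<le> norm x + d"
    using norm_triangle_ineq4[of x "x - p"] by (simp_all add: d_def)
  have "norm w = norm p / (1 + d)"
    using d by (simp add: w_def d_def)
  also have "\<dots> < 1"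
    using p_le x d by simp
  finally show "w \<in> unit_ball Y"
    using csubspace_scaleR[OF Y p] by (simp add: unit_ball_def w_def)
  have "1 / (1 + d) - 1 = - (d / (1 + d))"
    using d by (simp add: field_simps)
  then have "w - p = - (d / (1 + d)) *\<^sub>R p"
    by (metis w_def d_def scaleR_diff_left scaleR_one)
  then have "norm (w - p) = d / (1 + d) * norm p"
    using d by simp
  also have "\<dots> \<le> d / (1 + d) * (1 + d)"
    using p_le x d by (intro mult_left_mono) auto
  finally have "norm (w - p) \<le> d"
    using d by simp
  then show "norm (w - x) \<le> 2 * norm (x - p)"
    using norm_triangle_ineq[of "w - p" "p - x"] by (simp add: d_def norm_minus_commute)
qed

lemma tendsto_uniformly_continuous_on_near:
  fixes g :: "'a::real_normed_vector \<Rightarrow> 'b::real_normed_vector"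
  assumes g: "uniformly_continuous_on S g"
    and uS: "\<forall>\<^sub>F x in F. u x \<in> S" and vS: "\<forall>\<^sub>F x in F. v x \<in> S"
    and near: "((\<lambda>x. norm (u x - v x)) \<longlongrightarrow> 0) F" and lim: "((\<lambda>x. g (v x)) \<longlongrightarrow> c) F"
  shows "((\<lambda>x. g (u x)) \<longlongrightarrow> c) F"
proof -
  have "((\<lambda>x. g (u x) - g (v x)) \<longlongrightarrow> 0) F"
  proof (rule tendstoI)
    fix e :: real assume "e > 0"
    then obtain \<delta> where "\<delta> > 0"
      and \<delta>: "\<forall>x\<in>S. \<forall>x'\<in>S. dist x' x < \<delta> \<longrightarrow> dist (g x') (g x) < e"
      using g unfolding uniformly_continuous_on_def by blast
    show "\<forall>\<^sub>F x in F. dist (g (u x) - g (v x)) 0 < e"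
      using uS vS tendstoD[OF near \<open>\<delta> > 0\<close>]
    proof eventually_elim
      case (elim x)
      then show ?case
        using \<delta>[rule_format, OF elim(2) elim(1)] by (simp add: dist_norm)
    qed
  qed
  from tendsto_add[OF this lim] show ?thesis
    by simp
qed

lemma weakly_null_net_into_subspace:
  fixes f :: "'a::{complex_normed_vector, complete_space} \<Rightarrow> complex" and F :: "'a filter"
  assumes f: "restr UNIV f \<in> Au UNIV" and Y: "csubspace Y" "closed Y" "finite_codim Y"
    and ball: "eventually (\<lambda>x. x \<in> ball 0 1) F"
    and weak: "\<forall>\<phi>\<in>cdual UNIV. (\<phi> \<longlongrightarrow> 0) F" and fc: "(f \<longlongrightarrow> c) F"
  obtains w where "eventually (\<lambda>x. w x \<in> unit_ball Y) F" "((\<lambda>x. f (w x)) \<longlongrightarrow> c) F"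
    "\<And>z. z \<in> cdual Y \<Longrightarrow> ((\<lambda>x. z (w x)) \<longlongrightarrow> 0) F"
proof -
  obtain P where P: "dominated_map_into Y P"
    using dominated_map_into_exists[OF Y] by blast
  have PY: "\<And>x. P x \<in> Y"
    using P by (simp add: dominated_map_into_def)
  define w where "w = (\<lambda>x. (1 / (1 + norm (x - P x))) *\<^sub>R P x)"
  have wY: "eventually (\<lambda>x. w x \<in> unit_ball Y) F"
    using ball by eventually_elim (use shrink_into_unit_ball(1)[OF Y(1) PY] in \<open>simp add: w_def\<close>)
  have upper: "((\<lambda>x. 2 * norm (x - P x)) \<longlongrightarrow> 0) F"
    using tendsto_mult_right_zero[OF tendsto_dominated_map_defect[OF P weak]] by simp
  have bound: "\<forall>\<^sub>F x in F. norm (w x - x) \<le> 2 * norm (x - P x)"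
    using ball by eventually_elim (use shrink_into_unit_ball(2)[OF Y(1) PY] in \<open>simp add: w_def\<close>)
  have near: "((\<lambda>x. norm (w x - x)) \<longlongrightarrow> 0) F"
    by (rule tendsto_sandwich[OF _ bound tendsto_const upper]) simp
  have "uniformly_continuous_on (unit_ball UNIV) f"
    using AuD(3)[OF f] by (simp only: uniformly_continuous_on_restr)
  moreover have "\<forall>\<^sub>F x in F. w x \<in> unit_ball UNIV" "\<forall>\<^sub>F x in F. x \<in> unit_ball UNIV"
    using wY ball by (auto elim!: eventually_mono simp: unit_ball_def)
  ultimately have fw: "((\<lambda>x. f (w x)) \<longlongrightarrow> c) F"
    using tendsto_uniformly_continuous_on_near[OF _ _ _ near fc] by blast
  have zw: "((\<lambda>x. z (w x)) \<longlongrightarrow> 0) F" if z: "z \<in> cdual Y" for z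
  proof -
    have lim: "((\<lambda>x. cmod (z (P x))) \<longlongrightarrow> 0) F"
      using weak cdual_comp_dominated_map[OF P z] by (simp add: tendsto_norm_zero)
    have le: "norm (z (w x)) \<le> cmod (z (P x))" for x
    proof -
      have "z (w x) = of_real (1 / (1 + norm (x - P x))) * z (P x)"
        unfolding w_def by (rule clinear_on_scaleR[OF cdual_clinear_on[OF z] PY])
      then have "norm (z (w x)) = 1 / (1 + norm (x - P x)) * cmod (z (P x))"
        by (simp only: norm_mult norm_of_real) simp
      also have "\<dots> \<le> 1 * cmod (z (P x))"
        by (intro mult_right_mono) (simp_all add: divide_le_eq_1 add_pos_nonneg)
      finally show ?thesis
        by simp
    qed
    show ?thesis
      by (rule Lim_null_comparison[OF always_eventually lim]) (simp add: le)
  qed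
  show thesis
    by (rule that[OF wY fw zw])
qed

lemma bounded_mult_comp:
  fixes g h :: "'a \<Rightarrow> 'b::real_normed_algebra"
  assumes "bounded (g ` S)" "bounded (h ` S)"
  shows "bounded ((\<lambda>x. g x * h x) ` S)"
proof -
  obtain a b where ab: "\<And>y. y \<in> S \<Longrightarrow> norm (g y) \<le> a" "\<And>y. y \<in> S \<Longrightarrow> norm (h y) \<le> b"
    using assms unfolding bounded_iff by auto
  have "norm (g y * h y) \<le> a * b" if "y \<in> S" for y
  proof -
    have "norm (g y) * norm (h y) \<le> a * b"
      using ab[OF that] by (intro mult_mono) (auto intro: order_trans[OF norm_ge_zero])
    then show ?thesis
      using norm_mult_ineq[of "g y" "h y"] by linarith
  qed
  then show ?thesis
    unfolding bounded_iff by blast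
qed

text \<open>Evaluations at points of \<open>S\<close>, truncated to 0 on functions unbounded on \<open>S\<close>, all lie in
  one product of closed discs, which is compact by Tychonoff's theorem.\<close>

definition bounded_eval :: "'a set \<Rightarrow> 'a \<Rightarrow> ('a \<Rightarrow> complex) \<Rightarrow> complex" where
  "bounded_eval S y g = (if bounded (g ` S) then g y else 0)"

lemma bounded_eval_cluster_point:
  fixes w :: "'b \<Rightarrow> 'a"
  assumes F: "F \<noteq> bot" and wS: "\<forall>\<^sub>F x in F. w x \<in> S"
  obtains G p where "G \<noteq> bot"
    "\<And>Q. (\<forall>\<^sub>F x in F. Q (bounded_eval S (w x))) \<Longrightarrow> eventually Q G"
    "\<And>g. ((\<lambda>q. q g) \<longlongrightarrow> p g) G"
proof -
  define B where "B g = (if bounded (g ` S) then (SOME b. \<forall>y\<in>S. cmod (g y) \<le> b) else 0)" for g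
  define K0 where "K0 = PiE UNIV (\<lambda>g. cball (0::complex) (B g))"
  have "bounded_eval S y \<in> K0" if "y \<in> S" for y
  proof -
    have "bounded_eval S y g \<in> cball 0 (B g)" for g
    proof (cases "bounded (g ` S)")
      case True
      then have "\<exists>b. \<forall>y\<in>S. cmod (g y) \<le> b"
        unfolding bounded_iff by auto
      then have "\<forall>y\<in>S. cmod (g y) \<le> (SOME b. \<forall>y\<in>S. cmod (g y) \<le> b)"
        by (rule someI_ex)
      then have "\<forall>y\<in>S. cmod (g y) \<le> B g"
        unfolding B_def using True by simp
      then show ?thesis
        using True that by (simp add: bounded_eval_def)
    qed (simp add: bounded_eval_def B_def)
    then show ?thesis
      unfolding K0_def by (simp add: PiE_iff)
  qed
  then have evK0: "\<forall>\<^sub>F x in F. bounded_eval S (w x) \<in> K0"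
    using wS by (auto elim: eventually_mono)
  have "compactin (product_topology (\<lambda>_. euclidean) UNIV) K0"
    unfolding K0_def compactin_PiE by simp
  then have "compact K0"
    by (simp add: euclidean_product_topology)
  moreover have "filtermap (\<lambda>x. bounded_eval S (w x)) F \<noteq> bot"
    using F by (simp add: filtermap_bot_iff)
  moreover have "eventually (\<lambda>q. q \<in> K0) (filtermap (\<lambda>x. bounded_eval S (w x)) F)"
    using evK0 by (simp add: eventually_filtermap)
  ultimately obtain p where "inf (nhds p) (filtermap (\<lambda>x. bounded_eval S (w x)) F) \<noteq> bot"
    unfolding compact_filter by blast
  then show thesis
  proof (rule that)
    show "eventually Q (inf (nhds p) (filtermap (\<lambda>x. bounded_eval S (w x)) F))"
      if "\<forall>\<^sub>F x in F. Q (bounded_eval S (w x))" for Q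
      using that by (intro filter_leD[OF inf_le2]) (simp add: eventually_filtermap)
    have "((\<lambda>q. q) \<longlongrightarrow> p) (inf (nhds p) (filtermap (\<lambda>x. bounded_eval S (w x)) F))"
      by (rule tendsto_mono[OF inf_le1 filterlim_ident])
    then show "((\<lambda>q. q g) \<longlongrightarrow> p g) (inf (nhds p) (filtermap (\<lambda>x. bounded_eval S (w x)) F))" for g
      by (rule continuous_on_tendsto_compose[OF continuous_on_product_coordinates]) auto
  qed
qed

lemma bounded_eval_cluster_functional:
  fixes w :: "'b \<Rightarrow> 'a"
  assumes F: "F \<noteq> bot" and wS: "\<forall>\<^sub>F x in F. w x \<in> S"
  obtains p :: "('a \<Rightarrow> complex) \<Rightarrow> complex"
  where "\<And>g L. bounded (g ` S) \<Longrightarrow> ((\<lambda>x. g (w x)) \<longlongrightarrow> L) F \<Longrightarrow> p g = L"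
    "\<And>g h. bounded (g ` S) \<Longrightarrow> bounded (h ` S) \<Longrightarrow> p (\<lambda>x. g x + h x) = p g + p h"
    "\<And>g k. bounded (g ` S) \<Longrightarrow> p (\<lambda>x. k * g x) = k * p g"
    "\<And>g h. bounded (g ` S) \<Longrightarrow> bounded (h ` S) \<Longrightarrow> p (\<lambda>x. g x * h x) = p g * p h"
proof -
  obtain G p where G: "G \<noteq> bot" and evG: "\<And>Q. (\<forall>\<^sub>F x in F. Q (bounded_eval S (w x))) \<Longrightarrow> eventually Q G"
    and proj: "\<And>g. ((\<lambda>q. q g) \<longlongrightarrow> p g) G"
    using bounded_eval_cluster_point[OF F wS] by blast
  have limit: "p g = L" if "bounded (g ` S)" "((\<lambda>x. g (w x)) \<longlongrightarrow> L) F" for g L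
  proof -
    have "((\<lambda>q. q g) \<longlongrightarrow> L) G"
    proof (rule tendstoI)
      fix e :: real assume "e > 0"
      show "\<forall>\<^sub>F q in G. dist (q g) L < e"
        using tendstoD[OF that(2) \<open>e > 0\<close>] that(1) by (intro evG) (simp add: bounded_eval_def)
    qed
    then show ?thesis
      using tendsto_unique[OF G proj] by blast
  qed
  have identity: "p g = h (p ga) (p gb)"
    if "\<And>y. bounded_eval S y g = h (bounded_eval S y ga) (bounded_eval S y gb)"
      "((\<lambda>q. h (q ga) (q gb)) \<longlongrightarrow> h (p ga) (p gb)) G"
    for g ga gb and h :: "complex \<Rightarrow> complex \<Rightarrow> complex"
  proof -
    have "\<forall>\<^sub>F q in G. h (q ga) (q gb) = q g"
      by (rule evG) (simp add: that(1))
    then have "((\<lambda>q. q g) \<longlongrightarrow> h (p ga) (p gb)) G"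
      by (rule Lim_transform_eventually[OF that(2)])
    then show ?thesis
      using tendsto_unique[OF G proj] by blast
  qed
  show thesis
  proof (rule that[OF limit])
    show "p (\<lambda>x. g x + h x) = p g + p h" if "bounded (g ` S)" "bounded (h ` S)" for g h
      using that bounded_plus_comp[of g S h]
      by (intro identity[where h = "\<lambda>a b. a + b"] tendsto_add proj) (simp add: bounded_eval_def)
    show "p (\<lambda>x. k * g x) = k * p g" if "bounded (g ` S)" for g k
      using that bounded_mult_comp[of "\<lambda>_. k" S g]
      by (intro identity[where h = "\<lambda>a b. k * a" and gb = g] tendsto_mult proj tendsto_const)
        (simp add: bounded_eval_def image_constant_conv)
    show "p (\<lambda>x. g x * h x) = p g * p h" if "bounded (g ` S)" "bounded (h ` S)" for g h
      using that bounded_mult_comp[of g S h]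
      by (intro identity[where h = "\<lambda>a b. a * b"] tendsto_mult proj) (simp add: bounded_eval_def)
  qed
qed

lemma bounded_restr_cdual:
  assumes z: "z \<in> cdual Y"
  shows "bounded (restr Y z ` unit_ball Y)"
proof -
  obtain K where "K \<ge> 0" and K: "\<And>x. x \<in> Y \<Longrightarrow> cmod (z x) \<le> K * norm x"
    using cdual_bound[OF z] by blast
  have "cmod (restr Y z y) \<le> K" if "y \<in> unit_ball Y" for y
    using K[OF unit_ballD(1)[OF that]] mult_left_mono[OF less_imp_le[OF unit_ballD(2)[OF that]] \<open>K \<ge> 0\<close>] that
    by (simp add: restr_def)
  then show ?thesis
    unfolding bounded_iff by blast
qed

lemma M0_value_of_weakly_null_net:
  fixes w :: "'b \<Rightarrow> 'a::complex_normed_vector"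
  assumes Y: "csubspace Y" and F: "F \<noteq> bot"
    and wY: "\<forall>\<^sub>F x in F. w x \<in> unit_ball Y"
    and wz: "\<And>z. z \<in> cdual Y \<Longrightarrow> ((\<lambda>x. z (w x)) \<longlongrightarrow> 0) F"
    and g0: "g0 \<in> Au Y" and g0c: "((\<lambda>x. g0 (w x)) \<longlongrightarrow> c) F"
  shows "\<exists>\<tau>\<in>M0 Y. \<tau> g0 = c"
proof -
  obtain p :: "('a \<Rightarrow> complex) \<Rightarrow> complex"
    where limit: "\<And>g L. bounded (g ` unit_ball Y) \<Longrightarrow> ((\<lambda>x. g (w x)) \<longlongrightarrow> L) F \<Longrightarrow> p g = L"
    and add: "\<And>g h. bounded (g ` unit_ball Y) \<Longrightarrow> bounded (h ` unit_ball Y) \<Longrightarrow>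
      p (\<lambda>x. g x + h x) = p g + p h"
    and cmult: "\<And>g k. bounded (g ` unit_ball Y) \<Longrightarrow> p (\<lambda>x. k * g x) = k * p g"
    and mult: "\<And>g h. bounded (g ` unit_ball Y) \<Longrightarrow> bounded (h ` unit_ball Y) \<Longrightarrow>
      p (\<lambda>x. g x * h x) = p g * p h"
    by (fact bounded_eval_cluster_functional[OF F wY])
  have "p (restr Y (\<lambda>_. 1)) = 1"
  proof (rule limit)
    show "bounded (restr Y (\<lambda>_. 1) ` unit_ball Y)"
      by (rule AuD(2)[OF Au_restr_const[OF Y]])
    have "\<forall>\<^sub>F x in F. 1 = restr Y (\<lambda>_. 1) (w x)"
      using wY by eventually_elim (simp add: restr_def)
    then show "((\<lambda>x. restr Y (\<lambda>_. 1) (w x)) \<longlongrightarrow> 1) F"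
      by (rule Lim_transform_eventually[OF tendsto_const])
  qed
  then have "\<exists>g\<in>Au Y. p g \<noteq> 0"
    using Au_restr_const[OF Y, of 1] by (intro bexI[of _ "restr Y (\<lambda>_. 1)"]) simp_all
  moreover have "p (\<lambda>x. g x + h x) = p g + p h" "p (\<lambda>x. g x * h x) = p g * p h"
    if "g \<in> Au Y" "h \<in> Au Y" for g h
    using add[OF AuD(2)[OF that(1)] AuD(2)[OF that(2)]] mult[OF AuD(2)[OF that(1)] AuD(2)[OF that(2)]]
    by simp_all
  moreover have "p (\<lambda>x. k * g x) = k * p g" if "g \<in> Au Y" for g k
    using cmult[OF AuD(2)[OF that]] .
  ultimately have "p \<in> spectrum_Au Y"
    unfolding spectrum_Au_def by blast
  moreover have "p (restr Y z) = 0" if z: "z \<in> cdual Y" for z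
  proof (rule limit[OF bounded_restr_cdual[OF z]])
    have "\<forall>\<^sub>F x in F. z (w x) = restr Y z (w x)"
      using wY by eventually_elim (simp add: restr_def)
    then show "((\<lambda>x. restr Y z (w x)) \<longlongrightarrow> 0) F"
      by (rule Lim_transform_eventually[OF wz[OF z]])
  qed
  moreover have "p g0 = c"
    by (rule limit[OF AuD(2)[OF g0] g0c])
  ultimately show ?thesis
    unfolding M0_def by blast
qed

lemma M0_value_if_weak_cluster_0:
  fixes f :: "'a::{complex_normed_vector, complete_space} \<Rightarrow> complex"
  assumes f: "restr UNIV f \<in> Au UNIV" and c: "c \<in> weak_cluster_0 f"
    and Y: "csubspace Y" "closed Y" "finite_codim Y"
  shows "c \<in> (\<lambda>\<tau>. \<tau> (restr Y f)) ` M0 Y"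
proof -
  obtain F where F: "F \<noteq> bot" "eventually (\<lambda>x. x \<in> ball 0 1) F"
      "\<forall>\<phi>\<in>cdual UNIV. (\<phi> \<longlongrightarrow> 0) F" "(f \<longlongrightarrow> c) F"
    using c unfolding weak_cluster_0_def by blast
  obtain w where wY: "\<forall>\<^sub>F x in F. w x \<in> unit_ball Y" and fw: "((\<lambda>x. f (w x)) \<longlongrightarrow> c) F"
    and wz: "\<And>z. z \<in> cdual Y \<Longrightarrow> ((\<lambda>x. z (w x)) \<longlongrightarrow> 0) F"
    using weakly_null_net_into_subspace[OF f Y F(2,3,4)] by blast
  have "\<forall>\<^sub>F x in F. f (w x) = restr Y f (w x)"
    using wY by eventually_elim (simp add: restr_def)
  then have "((\<lambda>x. restr Y f (w x)) \<longlongrightarrow> c) F"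
    by (rule Lim_transform_eventually[OF fw])
  then obtain \<tau> where "\<tau> \<in> M0 Y" "\<tau> (restr Y f) = c"
    using M0_value_of_weakly_null_net[OF Y(1) F(1) wY wz Au_restr[OF f Y(1)]] by blast
  then show ?thesis
    by (simp add: rev_image_eqI)
qed

theorem proposition2p6:
  fixes f :: "'a::{complex_normed_vector, complete_space} \<Rightarrow> complex"
  assumes "restr UNIV f \<in> Au UNIV"
  shows "weak_cluster_0 f =
    (\<Inter>Y \<in> {Y. csubspace Y \<and> closed Y \<and> finite_codim Y}.
        (\<lambda>\<tau>. \<tau> (restr Y f)) ` M0 Y)"
proof (intro equalityI subsetI)
  fix c assume "c \<in> weak_cluster_0 f"
  then show "c \<in> (\<Inter>Y \<in> {Y. csubspace Y \<and> closed Y \<and> finite_codim Y}. (\<lambda>\<tau>. \<tau> (restr Y f)) ` M0 Y)"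
    using M0_value_if_weak_cluster_0[OF assms] by blast
next
  fix c assume "c \<in> (\<Inter>Y \<in> {Y. csubspace Y \<and> closed Y \<and> finite_codim Y}. (\<lambda>\<tau>. \<tau> (restr Y f)) ` M0 Y)"
  then show "c \<in> weak_cluster_0 f"
    by (intro weak_cluster_0_if_M0_values[OF assms]) blast
qed

end
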